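(* Let $N\ge1$, $K>0$, $r_1,\dots,r_N$ real numbers and $(\mu_{ij})_{1\le i,j\le N}$ a real matrix with $r_i>0$ for all $i$, $(\mu_{ij})$ nonnegative, symmetric and irreducible, and $\sum_{j=1}^N\mu_{ij}\le r_i/2$ for all $i$. Let $\alpha\in C^1_{loc}(\mathbb{R}^N,\mathbb{R})$ satisfy: $\alpha(0)=0$, $\alpha$ is monotone increasing with respect to the componentwise order, there exist positive $R,k,c$ with $c(\sum_j v_j)^k\le\alpha(v)$ for all $v\in[0,\infty)^N$ with $\sum_j|v_j|\ge R$, and $\nabla\alpha(x)>0$ (componentwise) for all $x\in\mathbb{R}^N$. Let $\psi_1,\dots,\psi_N\in C^1_{loc}(\mathbb{R}^N,\mathbb{R})$ be uniformly bounded, and for $\epsilon\ge0$ set $\Psi_i(v)=\alpha(v)+\epsilon\psi_i(v)$. Assume that for each such $\epsilon$ under consideration the functions $\Psi_i$ are locally Lipschitz, satisfy $\Psi_i(0)=0$, are monotone increasing for the componentwise order, and for each $i$ there exist positive $R_i,k_i,c_i$ with $c_i(\sum_jv_j)^{k_i}\le\Psi_i(v)$ for all $v\in[0,\infty)^N$ with $\sum_j|v_j|\ge R_i$. Then there exists $\epsilon_0>0$ such that for all $0\le\epsilon\le\epsilon_0$, the positive stationary solution $\bar v_\epsilon$ of $$\frac{dv_i}{dt}=v_i\left[r_i-\frac{1}{K}\Psi_i(v)\right]+\sum_{j=1}^N\mu_{ij}(v_j-v_i),\qquad i=1,\dots,N,$$ attracts all trajectories initiated from any nonzero nonnegative initial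 datum: for every $v(0)\in[0,\infty)^N$, $v(0)\neq0$, the solution satisfies $v(t)\to\bar v_\epsilon$ as $t\to\infty$.
   Context: A stationary solution is a vector with all components strictly positive (positive) at which the right-hand side of the system vanishes for every $i$; its existence under these assumptions is part of the setting. *)

theory Defs
  imports "HOL-Analysis.Analysis"
begin

definition comp_le :: "real ^ 'n \<Rightarrow> real ^ 'n \<Rightarrow> bool" where
  "comp_le x y \<longleftrightarrow> (\<forall>i. x $ i \<le> y $ i)"

definition comp_mono :: "(real ^ 'n \<Rightarrow> real) \<Rightarrow> bool" where
  "comp_mono f \<longleftrightarrow> (\<forall>x y. comp_le x y \<longrightarrow> f x \<le> f y)"

definition C1_grad :: "(real ^ 'n \<Rightarrow> real) \<Rightarrow> (real ^ 'n \<Rightarrow> real ^ 'n) \<Rightarrow> bool" where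
  "C1_grad f g \<longleftrightarrow> (\<forall>x. (f has_derivative (\<lambda>h. g x \<bullet> h)) (at x)) \<and> continuous_on UNIV g"

definition locally_lipschitz :: "(real ^ 'n \<Rightarrow> real) \<Rightarrow> bool" where
  "locally_lipschitz f \<longleftrightarrow> (\<forall>x. \<exists>\<delta>>0. \<exists>L. L-lipschitz_on (cball x \<delta>) f)"

definition growth_bound :: "(real ^ 'n \<Rightarrow> real) \<Rightarrow> bool" where
  "growth_bound f \<longleftrightarrow> (\<exists>R k c. R > 0 \<and> k > 0 \<and> c > 0 \<and>
     (\<forall>v. (\<forall>j. 0 \<le> v $ j) \<and> (\<Sum>j\<in>UNIV. \<bar>v $ j\<bar>) \<ge> R \<longrightarrow>
          c * (\<Sum>j\<in>UNIV. v $ j) powr k \<le> f v))"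

text \<open>Irreducibility of a nonnegative matrix: its directed graph (edge i -> j iff mu_ij > 0)
  is strongly connected. (Every 1x1 matrix is irreducible.)\<close>
definition irreducible_mat :: "real ^ 'n ^ 'n \<Rightarrow> bool" where
  "irreducible_mat mu \<longleftrightarrow> (\<forall>i j. i \<noteq> j \<longrightarrow> (i, j) \<in> {(a, b). mu $ a $ b > 0}\<^sup>+)"

definition sys_rhs :: "real ^ 'n \<Rightarrow> real \<Rightarrow> real ^ 'n ^ 'n \<Rightarrow> ('n \<Rightarrow> real ^ 'n \<Rightarrow> real)
    \<Rightarrow> real ^ 'n \<Rightarrow> real ^ 'n" where
  "sys_rhs r K mu Psi v = (\<chi> i. v $ i * (r $ i - Psi i v / K) + (\<Sum>j\<in>UNIV. mu $ i $ j * (v $ j - v $ i)))"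

end

theory Submission
  imports Defs
begin

text \<open>The linear part of the system is \<open>v \<mapsto> D v\<close> with
  \<open>D = diag (r\<^sub>i - \<Sum>\<^sub>j mu\<^sub>i\<^sub>j) + mu\<close>, a symmetric irreducible matrix with nonnegative
  off-diagonal entries. Maximising its Rayleigh quotient yields a positive unit eigenvector
  \<open>phi\<close> for its top eigenvalue \<open>lam > 0\<close>, and the quotient stays below \<open>lam - gap\<close> on the
  orthogonal complement of \<open>phi\<close>.

  Write a nonnegative state as \<open>v = p q\<close> with amplitude \<open>p = phi \<bullet> v\<close> and profile
  \<open>q\<close> normalised by \<open>phi \<bullet> q = 1\<close>. Since alpha is small near 0 and grows at infinity, every
  nonzero nonnegative trajectory has its amplitude eventually in a fixed interval \<open>[a, b]\<close>.
  There, the amplitude equation is contracting because alpha increases strictly along rays, and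
  the profile equation is contracting because of the spectral gap. The coupling between them is
  absorbed by weighting the profile part, and for small \<open>\<epsilon>\<close> the perturbation psi is
  absorbed as well, so \<open>(p - p\<^sub>s)\<^sup>2 + \<theta> |q - q\<^sub>s|\<^sup>2\<close>, where \<open>p\<^sub>s q\<^sub>s\<close> is the
  stationary solution, decays exponentially along trajectories. Nonnegativity of trajectories follows from a Gronwall estimate for the squared
  negative parts.\<close>

section \<open>Symmetric Metzler matrices\<close>

lemma irreducible_mat_mono:
  assumes irr: "irreducible_mat mu"
    and pos: "\<And>i j. i \<noteq> j \<Longrightarrow> mu$i$j > 0 \<Longrightarrow> A$i$j > 0"
  shows "irreducible_mat A"
proof -
  let ?R = "\<lambda>M. {(a, b). M $ a $ b > (0::real)}"
  have "i = j \<or> (i, j) \<in> (?R A)\<^sup>+" if "(i, j) \<in> (?R mu)\<^sup>+" for i j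
    using that
  proof (induction rule: trancl_induct)
    case (base b)
    then show ?case using pos by blast
  next
    case (step b c)
    show ?case
    proof (cases "b = c")
      case False
      then have "(b, c) \<in> ?R A" using pos step(2) by blast
      then show ?thesis using step(3) by (metis r_into_trancl' trancl_into_trancl)
    qed (use step(3) in simp)
  qed
  then show ?thesis using irr unfolding irreducible_mat_def by blast
qed

lemma inner_matrix_symmetric:
  assumes "transpose A = A"
  shows "x \<bullet> ((A::real^'n^'n) *v y) = (A *v x) \<bullet> y"
  by (metis assms dot_lmul_matrix vector_transpose_matrix)

lemma quadratic_form_sum: "x \<bullet> ((A::real^'n^'n) *v y) = (\<Sum>i\<in>UNIV. \<Sum>j\<in>UNIV. A$i$j * x$i * y$j)"
  by (simp add: inner_vec_def matrix_vector_mult_def sum_distrib_left mult_ac)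

lemma quadratic_form_scaleR: "(c *\<^sub>R x) \<bullet> ((A::real^'n^'n) *v (c *\<^sub>R x)) = c^2 * (x \<bullet> (A *v x))"
  by (simp add: matrix_vector_mult_scaleR power2_eq_square)

lemma quadratic_form_le_abs:
  fixes A :: "real^'n^'n"
  assumes "\<And>i j. i \<noteq> j \<Longrightarrow> A$i$j \<ge> 0"
  shows "x \<bullet> (A *v x) \<le> (\<chi> i. \<bar>x$i\<bar>) \<bullet> (A *v (\<chi> i. \<bar>x$i\<bar>))"
  unfolding quadratic_form_sum
proof (intro sum_mono)
  fix i j
  have "A$i$j * (x$i * x$j) \<le> A$i$j * (\<bar>x$i\<bar> * \<bar>x$j\<bar>)"
  proof (cases "i = j")
    case False
    then show ?thesis using assms by (intro mult_left_mono) (auto simp: abs_mult[symmetric])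
  qed (simp add: abs_mult_self_eq)
  then show "A$i$j * x$i * x$j \<le> A$i$j * (\<chi> i. \<bar>x$i\<bar>) $ i * (\<chi> i. \<bar>x$i\<bar>) $ j"
    by (simp add: mult.assoc)
qed

lemma quadratic_form_le_if_unit_le:
  fixes A :: "real^'n^'n"
  assumes unit: "\<And>y. norm y = 1 \<Longrightarrow> P y \<Longrightarrow> y \<bullet> (A *v y) \<le> c"
    and cone: "\<And>x t. P x \<Longrightarrow> P (t *\<^sub>R x)"
    and "P x"
  shows "x \<bullet> (A *v x) \<le> c * (norm x)^2"
proof (cases "x = 0")
  case False
  define y where "y = (1 / norm x) *\<^sub>R x"
  have "norm y = 1" "P y" using False cone \<open>P x\<close> by (simp_all add: y_def)
  then have "y \<bullet> (A *v y) \<le> c" by (rule unit)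
  moreover have "y \<bullet> (A *v y) = (x \<bullet> (A *v x)) / (norm x)^2"
    unfolding y_def quadratic_form_scaleR by (simp add: power_divide)
  ultimately show ?thesis using False by (simp add: divide_le_eq)
qed simp

text \<open>A maximiser of the Rayleigh quotient of a symmetric matrix is an eigenvector: otherwise
  moving from it in the direction of the residual increases the quotient.\<close>
lemma eigenvector_if_quadratic_form_max:
  fixes A :: "real^'n^'n"
  assumes sym: "transpose A = A"
    and bound: "\<And>x. x \<bullet> (A *v x) \<le> lam * (norm x)^2"
    and max: "y \<bullet> (A *v y) = lam * (norm y)^2"
  shows "A *v y = lam *\<^sub>R y"
proof (rule ccontr)
  assume "A *v y \<noteq> lam *\<^sub>R y"
  define e where "e = A *v y - lam *\<^sub>R y"
  define n where "n = e \<bullet> e"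
  define c where "c = e \<bullet> (A *v e) - lam * (norm e)^2"
  define t where "t = n / (1 - c)"
  have n_pos: "n > 0" using \<open>A *v y \<noteq> lam *\<^sub>R y\<close> by (simp add: n_def e_def)
  have c_nonpos: "c \<le> 0" using bound by (simp add: c_def)
  have t_pos: "t > 0" using n_pos c_nonpos by (simp add: t_def)
  have ey: "y \<bullet> (A *v e) = e \<bullet> (A *v y)"
    using inner_matrix_symmetric[OF sym, of y e] by (simp add: inner_commute)
  have lhs: "(y + t *\<^sub>R e) \<bullet> (A *v (y + t *\<^sub>R e))
      = y \<bullet> (A *v y) + 2 * t * (e \<bullet> (A *v y)) + t^2 * (e \<bullet> (A *v e))"
    using ey by (simp add: matrix_vector_right_distrib matrix_vector_mult_scaleR inner_add_left
        inner_add_right power2_eq_square algebra_simps)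
  have rhs: "(norm (y + t *\<^sub>R e))^2 = (norm y)^2 + 2 * t * (e \<bullet> y) + t^2 * (norm e)^2"
    by (simp only: power2_norm_eq_inner)
      (simp add: inner_add_left inner_add_right inner_commute[of e y] power2_eq_square algebra_simps)
  have residual: "e \<bullet> (A *v y) - lam * (e \<bullet> y) = n"
    by (simp add: n_def e_def inner_diff_right algebra_simps)
  have "2 * t * (e \<bullet> (A *v y) - lam * (e \<bullet> y)) + t^2 * c \<le> 0"
    using bound[of "y + t *\<^sub>R e"] lhs rhs max by (simp add: c_def algebra_simps)
  then have "t * (2 * n + t * c) \<le> 0"
    using residual by (simp add: power2_eq_square algebra_simps)
  then have "2 * n + t * c \<le> 0" using t_pos by (simp add: mult_le_0_iff)
  moreover have "t * c + n = n / (1 - c)" using c_nonpos by (simp add: t_def field_simps)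
  moreover have "n / (1 - c) > 0" using n_pos c_nonpos by simp
  ultimately show False using n_pos by linarith
qed

lemma quadratic_form_max_on_sphere:
  fixes A :: "real^'n^'n"
  obtains x0 where "norm x0 = 1" "\<And>x. x \<bullet> (A *v x) \<le> (x0 \<bullet> (A *v x0)) * (norm x)^2"
proof -
  have cont: "continuous_on (sphere 0 1) (\<lambda>x. x \<bullet> (A *v x))"
    by (intro continuous_on_inner continuous_on_id matrix_vector_mult_linear_continuous_on)
  obtain z :: "real^'n" where "norm z = 1" using vector_choose_size[of 1] by auto
  then have "sphere (0::real^'n) 1 \<noteq> {}" by auto
  then obtain x0 where "x0 \<in> sphere 0 1" "\<forall>y\<in>sphere 0 1. y \<bullet> (A *v y) \<le> x0 \<bullet> (A *v x0)"
    using continuous_attains_sup[OF compact_sphere _ cont] by blast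
  then show ?thesis
    using that quadratic_form_le_if_unit_le[of "\<lambda>_. True" A "x0 \<bullet> (A *v x0)"] by auto
qed

lemma eigenvector_irreducible_pos:
  fixes A :: "real^'n^'n"
  assumes offdiag: "\<And>i j. i \<noteq> j \<Longrightarrow> A$i$j \<ge> 0" and irr: "irreducible_mat A"
    and y_nonneg: "\<And>i. y$i \<ge> 0" and eig: "A *v y = lam *\<^sub>R y" and "y \<noteq> 0"
  shows "y$i > 0"
proof (rule ccontr)
  assume "\<not> y$i > 0"
  then have yi: "y$i = 0" using y_nonneg[of i] by simp
  have zero_step: "y$c = 0" if "y$b = 0" "A$b$c > 0" for b c
  proof -
    have "(\<Sum>k\<in>UNIV. A$b$k * y$k) = 0"
      using eig \<open>y$b = 0\<close> by (simp add: matrix_vector_mult_def vec_eq_iff)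
    moreover have "\<forall>k\<in>UNIV. A$b$k * y$k \<ge> 0"
      using offdiag y_nonneg \<open>y$b = 0\<close> by (metis mult_nonneg_nonneg mult_zero_right)
    ultimately have "A$b$c * y$c = 0"
      using sum_nonneg_eq_0_iff[of UNIV "\<lambda>k. A$b$k * y$k"] by simp
    then show ?thesis using \<open>A$b$c > 0\<close> by simp
  qed
  have "y$j = 0" if "(i, j) \<in> {(a, b). A $ a $ b > 0}\<^sup>+" for j
    using that by (induction rule: trancl_induct) (use yi zero_step in auto)
  then have "y$j = 0" for j
    using irr yi unfolding irreducible_mat_def by (cases "i = j") auto
  then show False using \<open>y \<noteq> 0\<close> by (simp add: vec_eq_iff)
qed

lemma orthogonal_to_positive_has_neg_component:
  assumes "\<And>i. phi$i > 0" "phi \<bullet> y = 0" "y \<noteq> 0"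
  obtains i where "(y::real^'n)$i < 0"
proof (rule ccontr)
  assume "\<not> thesis"
  then have "\<forall>i. y$i \<ge> 0" using that by (meson not_le)
  then have "\<forall>i\<in>UNIV. phi$i * y$i \<ge> 0" using assms(1) by (simp add: less_imp_le)
  moreover have "(\<Sum>i\<in>UNIV. phi$i * y$i) = 0" using assms(2) by (simp add: inner_vec_def)
  ultimately have "\<forall>i\<in>UNIV. phi$i * y$i = 0"
    using sum_nonneg_eq_0_iff[of UNIV "\<lambda>i. phi$i * y$i"] by simp
  then have "y = 0" using assms(1) by (simp add: vec_eq_iff) (metis less_irrefl)
  then show False using assms(3) by simp
qed

text \<open>If the top of the Rayleigh quotient were attained on the orthogonal complement of the
  positive eigenvector, then the positive part of the maximiser would be a nonnegative
  eigenvector vanishing somewhere, contradicting irreducibility.\<close>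
lemma top_quadratic_form_not_orthogonal:
  fixes A :: "real^'n^'n"
  assumes sym: "transpose A = A" and offdiag: "\<And>i j. i \<noteq> j \<Longrightarrow> A$i$j \<ge> 0"
    and irr: "irreducible_mat A"
    and bound: "\<And>x. x \<bullet> (A *v x) \<le> lam * (norm x)^2"
    and phi_pos: "\<And>i. phi$i > 0" and orth: "phi \<bullet> y = 0"
    and max: "y \<bullet> (A *v y) = lam * (norm y)^2"
  shows "y = 0"
proof (rule ccontr)
  assume "y \<noteq> 0"
  define ya where "ya = (\<chi> i. \<bar>y$i\<bar>)"
  have "ya \<bullet> (A *v ya) = lam * (norm ya)^2"
    using quadratic_form_le_abs[OF offdiag, of y] bound[of ya] max
    by (simp add: ya_def norm_vec_def)
  then have "A *v (ya + y) = lam *\<^sub>R (ya + y)"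
    using eigenvector_if_quadratic_form_max[OF sym bound] max
    by (simp add: matrix_vector_right_distrib scaleR_add_right)
  moreover obtain i where "y$i < 0"
    using orthogonal_to_positive_has_neg_component[OF phi_pos orth \<open>y \<noteq> 0\<close>] .
  moreover obtain j where "(- y)$j < 0"
    using orthogonal_to_positive_has_neg_component[OF phi_pos, of "- y"] orth \<open>y \<noteq> 0\<close> by auto
  then have "ya + y \<noteq> 0" by (auto simp: ya_def vec_eq_iff intro!: exI[of _ j])
  moreover have "\<And>k. (ya + y)$k \<ge> 0" by (simp add: ya_def)
  ultimately have "(ya + y)$i > 0" using eigenvector_irreducible_pos[OF offdiag irr] by blast
  then show False using \<open>y$i < 0\<close> by (simp add: ya_def)
qed

lemma compact_strict_upper_bound:
  fixes f :: "'a::topological_space \<Rightarrow> real"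
  assumes "compact S" "continuous_on S f" "\<And>x. x \<in> S \<Longrightarrow> f x < c"
  obtains d where "d > 0" "\<And>x. x \<in> S \<Longrightarrow> f x \<le> c - d"
proof (cases "S = {}")
  case False
  then obtain x0 where "x0 \<in> S" "\<forall>x\<in>S. f x \<le> f x0"
    using continuous_attains_sup[OF assms(1) _ assms(2)] by blast
  then show ?thesis using that[of "c - f x0"] assms(3) by force
qed (use that[of 1] in simp)

text \<open>A variational form of the Perron--Frobenius theorem.\<close>
lemma principal_eigenvector_spectral_gap:
  fixes A :: "real^'n^'n"
  assumes sym: "transpose A = A" and offdiag: "\<And>i j. i \<noteq> j \<Longrightarrow> A$i$j \<ge> 0"
    and irr: "irreducible_mat A"
  obtains phi lam gap where "\<And>i. phi$i > 0" "norm phi = 1" "A *v phi = lam *\<^sub>R phi" "gap > 0"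
    "\<And>x. x \<bullet> (A *v x) \<le> lam * (norm x)^2"
    "\<And>x. phi \<bullet> x = 0 \<Longrightarrow> x \<bullet> (A *v x) \<le> (lam - gap) * (norm x)^2"
proof -
  let ?Q = "\<lambda>x. x \<bullet> (A *v x)"
  obtain x0 where x0: "norm x0 = 1" and bound: "\<And>x. ?Q x \<le> ?Q x0 * (norm x)^2"
    using quadratic_form_max_on_sphere by blast
  define lam where "lam = ?Q x0"
  have bound_lam: "\<And>x. ?Q x \<le> lam * (norm x)^2" using bound by (simp add: lam_def)
  define phi where "phi = (\<chi> i. \<bar>x0$i\<bar>)"
  have phi_norm: "norm phi = 1" using x0 by (simp add: phi_def norm_vec_def)
  have "?Q phi \<ge> lam" unfolding phi_def lam_def by (rule quadratic_form_le_abs[OF offdiag])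
  then have "?Q phi = lam * (norm phi)^2" using bound_lam[of phi] phi_norm by simp
  then have phi_eig: "A *v phi = lam *\<^sub>R phi"
    by (rule eigenvector_if_quadratic_form_max[OF sym bound_lam])
  have "phi \<noteq> 0" using phi_norm by auto
  then have phi_pos: "phi$i > 0" for i
    using eigenvector_irreducible_pos[OF offdiag irr _ phi_eig] by (simp add: phi_def)
  let ?S = "sphere 0 1 \<inter> {x. phi \<bullet> x = 0}"
  have "?Q y < lam" if "y \<in> ?S" for y
  proof -
    have "y \<noteq> 0" "phi \<bullet> y = 0" using that by auto
    then have "?Q y \<noteq> lam * (norm y)^2"
      using top_quadratic_form_not_orthogonal[OF sym offdiag irr bound_lam phi_pos] by blast
    then show ?thesis using bound_lam[of y] that by simp
  qed
  moreover have "compact ?S" by (intro compact_Int_closed compact_sphere closed_hyperplane)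
  moreover have "continuous_on ?S ?Q"
    by (intro continuous_on_inner continuous_on_id matrix_vector_mult_linear_continuous_on)
  ultimately obtain gap where "gap > 0" "\<And>y. y \<in> ?S \<Longrightarrow> ?Q y \<le> lam - gap"
    using compact_strict_upper_bound by blast
  then have "?Q x \<le> (lam - gap) * (norm x)^2" if "phi \<bullet> x = 0" for x
    using quadratic_form_le_if_unit_le[of "\<lambda>x. phi \<bullet> x = 0" A "lam - gap" x] that by auto
  then show ?thesis
    using that phi_pos phi_norm phi_eig \<open>gap > 0\<close> bound_lam by blast
qed

section \<open>Real analysis\<close>

lemma at_within_atLeast: "t0 < t \<Longrightarrow> at t within {t0..} = at (t::real)"
  by (rule at_within_interior) simp

lemma continuous_on_if_deriv_within:
  assumes "\<And>t. t \<ge> 0 \<Longrightarrow> (f has_real_derivative f' t) (at t within {0..})" "0 \<le> t0"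
  shows "continuous_on {t0..t1} f"
proof -
  have "continuous_on {0..} f"
    using assms(1) DERIV_continuous continuous_on_eq_continuous_within by (metis atLeast_iff)
  then show ?thesis by (rule continuous_on_subset) (use assms(2) in auto)
qed

lemma deriv_le_linear_imp_exp_bound:
  fixes f f' :: "real \<Rightarrow> real"
  assumes der: "\<And>s. s \<in> {t0..t} \<Longrightarrow> (f has_real_derivative f' s) (at s within {t0..t})"
    and le: "\<And>s. s \<in> {t0..t} \<Longrightarrow> f' s \<le> c * f s" and "t0 \<le> t"
  shows "f t \<le> exp (c * (t - t0)) * f t0"
proof -
  define W where "W = (\<lambda>s. exp (- c * s) * f s)"
  have W_der: "(W has_real_derivative exp (- c * s) * (f' s - c * f s)) (at s within {t0..t})"
    if "s \<in> {t0..t}" for s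
    unfolding W_def using der[OF that] by (auto intro!: derivative_eq_intros simp: algebra_simps)
  have "W t \<le> W t0"
  proof (rule DERIV_nonpos_imp_decreasing_open[OF \<open>t0 \<le> t\<close>])
    fix s assume s: "t0 < s" "s < t"
    then have "(W has_real_derivative exp (- c * s) * (f' s - c * f s)) (at s)"
      using W_der[of s] at_within_Icc_at[of t0 s t] by simp
    moreover have "exp (- c * s) * (f' s - c * f s) \<le> 0"
      using le[of s] s by (simp add: mult_nonneg_nonpos)
    ultimately show "\<exists>y. (W has_real_derivative y) (at s) \<and> y \<le> 0" by blast
  next
    show "continuous_on {t0..t} W"
      using W_der DERIV_continuous continuous_on_eq_continuous_within by blast
  qed
  then have "exp (- c * t) * f t \<le> exp (- c * t0) * f t0" by (simp add: W_def)
  then have "f t \<le> exp (c * t) * (exp (- c * t0) * f t0)"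
    by (simp add: exp_minus field_simps)
  also have "\<dots> = exp (c * (t - t0)) * f t0"
    by (simp add: right_diff_distrib exp_diff exp_minus field_simps)
  finally show ?thesis .
qed

lemma tendsto_mult_exp_neg_at_top: "(k::real) > 0 \<Longrightarrow> ((\<lambda>t. c * exp (- k * t)) \<longlongrightarrow> 0) at_top"
proof -
  assume "k > 0"
  then have "filterlim (\<lambda>t::real. - k * t) at_bot at_top"
    by (intro filterlim_tendsto_neg_mult_at_bot[OF tendsto_const _ filterlim_ident]) simp
  then show ?thesis using filterlim_compose[OF exp_at_bot] tendsto_mult_right_zero by blast
qed

lemma deriv_nonneg_below_imp_ge_min:
  fixes f f' :: "real \<Rightarrow> real"
  assumes der: "\<And>t. t \<ge> 0 \<Longrightarrow> (f has_real_derivative f' t) (at t within {0..})"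
    and nonneg: "\<And>t. t \<ge> t0 \<Longrightarrow> f t < M \<Longrightarrow> f' t \<ge> 0"
    and "0 \<le> t0" "t0 \<le> t1"
  shows "f t1 \<ge> min (f t0) M"
proof -
  define m where "m = min (f t0) M"
  have cont: "continuous_on {t0..t1} f" by (rule continuous_on_if_deriv_within[OF der \<open>0 \<le> t0\<close>])
  define S where "S = {t0..t1} \<inter> f -` {m..}"
  have "compact S"
    unfolding S_def compact_eq_bounded_closed
    by (auto intro: continuous_closed_preimage[OF cont] bounded_subset[of "{t0..t1}"])
  moreover have "t0 \<in> S" using \<open>t0 \<le> t1\<close> by (simp add: S_def m_def)
  ultimately obtain s where s: "s \<in> S" "\<forall>y\<in>S. y \<le> s" using compact_attains_sup by blast
  show ?thesis
  proof (cases "s = t1")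
    case False
    then have st: "s < t1" "t0 \<le> s" using s by (auto simp: S_def)
    have "f s \<le> f t1"
    proof (rule DERIV_nonneg_imp_increasing_open[OF less_imp_le[OF st(1)]])
      fix x assume x: "s < x" "x < t1"
      then have "x \<notin> S" using s by force
      then have "f x < m" using x st by (auto simp: S_def)
      then have "f' x \<ge> 0" using nonneg[of x] x st by (auto simp: m_def)
      moreover have "(f has_real_derivative f' x) (at x)"
        using der[of x] at_within_atLeast[of 0 x] x st \<open>0 \<le> t0\<close> by auto
      ultimately show "\<exists>y. (f has_real_derivative y) (at x) \<and> 0 \<le> y" by blast
    next
      show "continuous_on {s..t1} f" by (rule continuous_on_subset[OF cont]) (use st in auto)
    qed
    moreover have "f s \<ge> m" using s by (simp add: S_def)
    ultimately show ?thesis by (simp add: m_def)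
  qed (use s in \<open>simp add: S_def m_def\<close>)
qed

lemma eventually_ge_if_deriv_ge_below:
  fixes f f' :: "real \<Rightarrow> real"
  assumes der: "\<And>t. t \<ge> 0 \<Longrightarrow> (f has_real_derivative f' t) (at t within {0..})"
    and "d > 0" and grow: "\<And>t. t \<ge> 0 \<Longrightarrow> f t < M \<Longrightarrow> f' t \<ge> d"
  shows "\<exists>T\<ge>0. \<forall>t\<ge>T. f t \<ge> M"
proof -
  have "\<exists>T0\<ge>0. f T0 \<ge> M"
  proof (rule ccontr)
    assume "\<not> ?thesis"
    then have below: "f t < M" if "t \<ge> 0" for t using that by (meson not_le)
    define t where "t = (M - f 0) / d + 1"
    have t_pos: "t > 0" using below[of 0] \<open>d > 0\<close> by (simp add: t_def add_pos_nonneg)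
    define g where "g = (\<lambda>s. f s - d * s)"
    have g_der: "(g has_real_derivative (f' s - d)) (at s within {0..})" if "s \<ge> 0" for s
      unfolding g_def using der[OF that] by (auto intro!: derivative_eq_intros)
    have "g 0 \<le> g t"
    proof (rule DERIV_nonneg_imp_increasing_open[OF less_imp_le[OF t_pos]])
      fix x assume x: "0 < x" "x < t"
      have "(g has_real_derivative (f' x - d)) (at x)"
        using g_der[of x] at_within_atLeast[of 0 x] x by auto
      moreover have "f' x - d \<ge> 0" using grow[of x] below[of x] x by auto
      ultimately show "\<exists>y. (g has_real_derivative y) (at x) \<and> 0 \<le> y" by blast
    qed (rule continuous_on_if_deriv_within[OF g_der]; simp)
    then have "f t \<ge> f 0 + d * t" by (simp add: g_def)
    moreover have "f 0 + d * t = M + d" using \<open>d > 0\<close> by (simp add: t_def field_simps)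
    ultimately have "f t \<ge> M + d" by simp
    then show False using below[of t] t_pos \<open>d > 0\<close> by simp
  qed
  then obtain T0 where T0: "T0 \<ge> 0" "f T0 \<ge> M" by blast
  have "f t \<ge> M" if "t \<ge> T0" for t
  proof -
    have "f t \<ge> min (f T0) M"
      by (rule deriv_nonneg_below_imp_ge_min[OF der _ T0(1) that])
        (use grow \<open>d > 0\<close> T0 in \<open>auto intro: less_imp_le order_trans\<close>)
    then show ?thesis using T0 by simp
  qed
  then show ?thesis using T0 by blast
qed

lemma has_real_derivative_min_zero_square:
  "((\<lambda>x::real. (min x 0)^2) has_real_derivative 2 * min x 0) (at x)"
proof -
  consider "x < 0" | "x > 0" | "x = 0" by linarith
  then show ?thesis
  proof cases
    case 1
    have "((\<lambda>y::real. y^2) has_real_derivative 2 * x) (at x)"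
      by (auto intro!: derivative_eq_intros)
    then have "((\<lambda>y::real. (min y 0)^2) has_real_derivative 2 * x) (at x)"
      by (rule has_field_derivative_transform_within_open[of _ _ _ "{..<0}"]) (use 1 in auto)
    then show ?thesis using 1 by simp
  next
    case 2
    have "((\<lambda>y::real. 0) has_real_derivative 0) (at x)" by simp
    then have "((\<lambda>y::real. (min y 0)^2) has_real_derivative 0) (at x)"
      by (rule has_field_derivative_transform_within_open[of _ _ _ "{0<..}"]) (use 2 in auto)
    then show ?thesis using 2 by simp
  next
    case 3
    have "isCont (\<lambda>z::real. min z 0) x" by (intro continuous_intros)
    then show ?thesis
      by (intro CARAT_DERIV[THEN iffD2] exI[of _ "\<lambda>z. min z 0"])
        (auto simp: 3 power2_eq_square min_def)
  qed
qed

lemma has_real_derivative_vec_nth: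
  assumes "(v has_vector_derivative w) (at t within s)"
  shows "((\<lambda>t. v t $ i) has_real_derivative (w $ i)) (at t within s)"
  using bounded_linear.has_vector_derivative[OF bounded_linear_vec_nth assms]
  by (simp add: has_real_derivative_iff_has_vector_derivative)

lemma lipschitz_on_cball_if_grad:
  fixes f :: "real^'n \<Rightarrow> real"
  assumes der: "\<And>x. (f has_derivative (\<lambda>h. g x \<bullet> h)) (at x)" and "continuous_on UNIV g"
  obtains L where "L \<ge> 0" "\<And>x y. x \<in> cball 0 R \<Longrightarrow> y \<in> cball 0 R \<Longrightarrow> \<bar>f x - f y\<bar> \<le> L * norm (x - y)"
proof -
  have "compact (g ` cball 0 R)"
    by (intro compact_continuous_image continuous_on_subset[OF assms(2)] compact_cball) auto
  then obtain L where L: "L > 0" "\<forall>z\<in>g ` cball 0 R. norm z \<le> L"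
    using compact_imp_bounded bounded_pos by metis
  have lip: "\<bar>f x - f y\<bar> \<le> L * norm (x - y)" if "x \<in> cball 0 R" "y \<in> cball 0 R" for x y
  proof -
    have "norm (f x - f y) \<le> L * norm (x - y)"
    proof (rule differentiable_bound[OF convex_cball _ _ that])
      fix z assume "z \<in> cball (0::real^'n) R"
      show "(f has_derivative (\<lambda>h. g z \<bullet> h)) (at z within cball 0 R)"
        using has_derivative_subset[OF der subset_UNIV] .
      have "onorm (\<lambda>h. g z \<bullet> h) \<le> norm (g z) * onorm (\<lambda>h::real^'n. h)"
        by (rule onorm_inner_right) simp
      also have "\<dots> \<le> L" using L \<open>z \<in> cball 0 R\<close> by (simp add: onorm_id)
      finally show "onorm (\<lambda>h. g z \<bullet> h) \<le> L" .
    qed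
    then show ?thesis by simp
  qed
  show ?thesis by (rule that[OF less_imp_le[OF L(1)] lip])
qed

lemma mult_le_weighted_squares:
  fixes c1 c2 X Y :: real assumes "c1 > 0"
  shows "c2 * X * Y \<le> c1 / 2 * X^2 + c2^2 / (2 * c1) * Y^2"
proof -
  have "0 \<le> (c1 * X - c2 * Y)^2" by simp
  then have "2 * c1 * (c2 * X * Y) \<le> c1 * c1 * X^2 + c2^2 * Y^2"
    by (simp add: power2_eq_square algebra_simps)
  then show ?thesis using assms by (simp add: field_simps power2_eq_square)
qed

text \<open>The weight \<open>th\<close> on the second variable is chosen so that the cross term
  \<open>c2 X Y\<close> is dominated by the two diagonal terms.\<close>
lemma absorb_cross_and_error_terms:
  fixes c1 c2 gap th eta X Y T :: real
  assumes c1: "c1 > 0" and gap: "gap > 0" and th: "th = c2^2 / (c1 * gap) + 1"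
    and X: "X \<ge> 0" and Y: "Y \<ge> 0" and eta: "eta \<ge> 0" "8 * eta \<le> min c1 gap"
    and T: "T \<le> - c1 * X^2 + c2 * X * Y - th * gap * Y^2 + eta * (X + Y)^2"
  shows "T \<le> - (min c1 gap / 4) * (X^2 + th * Y^2)"
proof -
  define P where "P = c1 * X^2"
  define Q where "Q = th * gap * Y^2"
  define M where "M = min c1 gap"
  have th1: "th \<ge> 1" using th c1 gap by simp
  have "c2^2 / (2 * c1) \<le> th * gap / 2" using th c1 gap by (simp add: field_simps)
  then have "c2^2 / (2 * c1) * Y^2 \<le> th * gap / 2 * Y^2" by (rule mult_right_mono) simp
  moreover have "c1 / 2 * X^2 = P / 2" "th * gap / 2 * Y^2 = Q / 2" by (simp_all add: P_def Q_def)
  ultimately have cross: "c2 * X * Y \<le> P / 2 + Q / 2"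
    using mult_le_weighted_squares[OF c1, of c2 X Y] by linarith
  have "(X + Y)^2 \<le> 2 * (X^2 + Y^2)"
    using sum_squares_bound[of X Y] by (simp add: power2_eq_square algebra_simps)
  then have "eta * (X + Y)^2 \<le> eta * (2 * (X^2 + Y^2))" using eta by (simp add: mult_left_mono)
  also have "\<dots> = (2 * eta) * X^2 + (2 * eta) * Y^2" by (simp add: algebra_simps)
  also have "\<dots> \<le> (M / 4) * X^2 + (M / 4) * Y^2"
    using eta by (intro add_mono mult_right_mono) (auto simp: M_def)
  finally have error: "eta * (X + Y)^2 \<le> (M / 4) * X^2 + (M / 4) * Y^2" .
  have "M * X^2 \<le> c1 * X^2" by (rule mult_right_mono) (simp_all add: M_def)
  then have PX: "(M / 4) * X^2 \<le> P / 4" by (simp add: P_def)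
  have "M * (th * Y^2) \<le> gap * (th * Y^2)"
    by (rule mult_right_mono) (use th1 in \<open>simp_all add: M_def\<close>)
  then have QY: "(M / 4) * (th * Y^2) \<le> Q / 4" by (simp add: Q_def mult_ac)
  have "Y^2 \<le> th * Y^2" using th1 by (simp add: mult_le_cancel_right1)
  then have YY: "(M / 4) * Y^2 \<le> (M / 4) * (th * Y^2)"
    by (rule mult_left_mono) (use c1 gap in \<open>simp add: M_def\<close>)
  have "T \<le> - P + c2 * X * Y - Q + eta * (X + Y)^2" using T by (simp add: P_def Q_def)
  then have "T \<le> - (M / 4) * X^2 - (M / 4) * (th * Y^2)" using cross error PX QY YY by linarith
  then show ?thesis by (simp add: M_def algebra_simps)
qed

section \<open>The linearization at zero\<close>

definition linearization :: "real^'n \<Rightarrow> real^'n^'n \<Rightarrow> real^'n^'n" where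
  "linearization r mu = (\<chi> i j. (if i = j then r$i - (\<Sum>k\<in>UNIV. mu$i$k) else 0) + mu$i$j)"

lemma linearization_mult_nth:
  "(linearization r mu *v x) $ i = r$i * x$i + (\<Sum>j\<in>UNIV. mu$i$j * (x$j - x$i))"
proof -
  have "(linearization r mu *v x) $ i
      = (\<Sum>j\<in>UNIV. ((if i = j then r$i - (\<Sum>k\<in>UNIV. mu$i$k) else 0) + mu$i$j) * x$j)"
    by (simp add: linearization_def matrix_vector_mult_def)
  also have "\<dots> = (r$i - (\<Sum>k\<in>UNIV. mu$i$k)) * x$i + (\<Sum>j\<in>UNIV. mu$i$j * x$j)"
  proof -
    have "\<And>j. ((if i = j then r$i - (\<Sum>k\<in>UNIV. mu$i$k) else 0) + mu$i$j) * x$j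
       = (if i = j then (r$i - (\<Sum>k\<in>UNIV. mu$i$k)) * x$j else 0) + mu$i$j * x$j"
      by (simp add: distrib_right)
    then show ?thesis by (simp add: sum.distrib)
  qed
  also have "\<dots> = r$i * x$i + (\<Sum>j\<in>UNIV. mu$i$j * (x$j - x$i))"
    by (simp add: right_diff_distrib sum_subtractf sum_distrib_right left_diff_distrib)
  finally show ?thesis .
qed

lemma linearization_offdiag: "i \<noteq> j \<Longrightarrow> linearization r mu $ i $ j = mu $ i $ j"
  by (simp add: linearization_def)

lemma sys_rhs_eq_linearization:
  "sys_rhs r K mu Psi v = linearization r mu *v v - (\<chi> i. v$i * Psi i v / K)"
  by (simp add: vec_eq_iff sys_rhs_def linearization_mult_nth algebra_simps)

lemma transpose_linearization:
  "\<forall>i j. mu$i$j = mu$j$i \<Longrightarrow> transpose (linearization r mu) = linearization r mu"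
  by (simp add: vec_eq_iff transpose_def linearization_def)

lemma linearization_quadratic_form_ones:
  "(\<chi> i. 1) \<bullet> (linearization r mu *v (\<chi> i. 1)) = (\<Sum>i\<in>UNIV. r$i)"
  by (simp add: inner_vec_def linearization_mult_nth)

lemma irreducible_mat_linearization: "irreducible_mat mu \<Longrightarrow> irreducible_mat (linearization r mu)"
  by (rule irreducible_mat_mono) (auto simp: linearization_offdiag)

lemma linearization_principal_eigenvector:
  fixes r :: "real^'n" and mu :: "real^'n^'n"
  assumes r_pos: "\<forall>i. r$i > 0" and mu_nonneg: "\<forall>i j. mu$i$j \<ge> 0"
    and mu_sym: "\<forall>i j. mu$i$j = mu$j$i" and mu_irred: "irreducible_mat mu"
  obtains phi lam gap where "\<And>i. phi$i > 0" "norm phi = 1"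
    "linearization r mu *v phi = lam *\<^sub>R phi" "lam > 0" "gap > 0"
    "\<And>x. phi \<bullet> x = 0 \<Longrightarrow> x \<bullet> (linearization r mu *v x) \<le> (lam - gap) * (norm x)^2"
proof -
  obtain phi lam gap where pe: "\<And>i. phi$i > 0" "norm phi = 1"
    "linearization r mu *v phi = lam *\<^sub>R phi" "gap > 0"
    "\<And>x. x \<bullet> (linearization r mu *v x) \<le> lam * (norm x)^2"
    "\<And>x. phi \<bullet> x = 0 \<Longrightarrow> x \<bullet> (linearization r mu *v x) \<le> (lam - gap) * (norm x)^2"
    using principal_eigenvector_spectral_gap[OF transpose_linearization[OF mu_sym]
        _ irreducible_mat_linearization[OF mu_irred]] mu_nonneg
    by (metis linearization_offdiag)
  have "0 < (\<Sum>i\<in>UNIV. r$i)" using r_pos by (simp add: sum_pos)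
  also have "\<dots> \<le> lam * (norm ((\<chi> i. 1) :: real^'n))^2"
    using pe(5)[of "\<chi> i. 1"] linearization_quadratic_form_ones[of r mu] by simp
  finally have "lam > 0" by (simp add: zero_less_mult_iff)
  then show ?thesis using that pe by blast
qed

section \<open>Amplitude and profile\<close>

locale dispersal_system =
  fixes K :: real and r :: "real^'n" and mu :: "real^'n^'n"
    and alpha :: "real^'n \<Rightarrow> real" and ga :: "real^'n \<Rightarrow> real^'n"
    and psi :: "'n \<Rightarrow> real^'n \<Rightarrow> real" and gpsi :: "'n \<Rightarrow> real^'n \<Rightarrow> real^'n"
    and B :: real and phi :: "real^'n" and lam gap :: real
  assumes K_pos: "K > 0"
    and mu_nonneg: "\<And>i j. mu$i$j \<ge> 0"
    and mu_sym: "\<And>i j. mu$i$j = mu$j$i"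
    and alpha_der: "\<And>x. (alpha has_derivative (\<lambda>h. ga x \<bullet> h)) (at x)"
    and ga_cont: "continuous_on UNIV ga"
    and ga_pos: "\<And>x i. ga x $ i > 0"
    and alpha_0: "alpha 0 = 0"
    and alpha_growth: "growth_bound alpha"
    and psi_der: "\<And>i x. (psi i has_derivative (\<lambda>h. gpsi i x \<bullet> h)) (at x)"
    and gpsi_cont: "\<And>i. continuous_on UNIV (gpsi i)"
    and psi_bdd: "\<And>i x. \<bar>psi i x\<bar> \<le> B"
    and phi_pos: "\<And>i. phi$i > 0" and phi_norm: "norm phi = 1"
    and phi_eig: "linearization r mu *v phi = lam *\<^sub>R phi"
    and lam_pos: "lam > 0" and gap_pos: "gap > 0"
    and spectral_gap: "\<And>x. phi \<bullet> x = 0 \<Longrightarrow>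
      x \<bullet> (linearization r mu *v x) \<le> (lam - gap) * (norm x)^2"
begin

lemma B_nonneg: "0 \<le> B" using psi_bdd[of undefined 0] by linarith

lemma alpha_cont: "continuous_on S alpha"
  using has_derivative_continuous[OF alpha_der] by (simp add: continuous_at_imp_continuous_on)

lemma psi_cont: "continuous_on S (psi i)"
  using has_derivative_continuous[OF psi_der] by (simp add: continuous_at_imp_continuous_on)

definition rhs :: "real \<Rightarrow> real^'n \<Rightarrow> real^'n" where
  "rhs e v = sys_rhs r K mu (\<lambda>i v. alpha v + e * psi i v) v"

definition perturbation :: "real^'n \<Rightarrow> real^'n" where
  "perturbation v = (\<chi> i. psi i v * v$i)"

lemma rhs_eq: "rhs e v = linearization r mu *v v - (alpha v / K) *\<^sub>R v - (e / K) *\<^sub>R perturbation v"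
  unfolding rhs_def sys_rhs_eq_linearization using K_pos
  by (simp add: vec_eq_iff perturbation_def field_simps)

lemma rhs_nth:
  "rhs e v $ i = (r$i - (\<Sum>j\<in>UNIV. mu$i$j) - (alpha v + e * psi i v) / K) * v$i
     + (\<Sum>j\<in>UNIV. mu$i$j * v$j)"
  by (simp add: rhs_def sys_rhs_def algebra_simps sum_subtractf sum_distrib_left sum_distrib_right)

lemma inner_phi_linearization: "phi \<bullet> (linearization r mu *v x) = lam * (phi \<bullet> x)"
  using inner_matrix_symmetric[OF transpose_linearization, of mu phi r x] mu_sym phi_eig by simp

lemma inner_phi_rhs:
  "phi \<bullet> rhs e v = lam * (phi \<bullet> v) - (alpha v / K) * (phi \<bullet> v) - (e / K) * (phi \<bullet> perturbation v)"
  unfolding rhs_eq by (simp add: inner_diff_right inner_phi_linearization)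

definition phi_min :: real where "phi_min = Min (range (\<lambda>i. phi$i))"

definition norm_factor :: real where "norm_factor = real CARD('n) / phi_min"

lemma phi_min_pos: "phi_min > 0"
  unfolding phi_min_def by (simp add: phi_pos)

lemma phi_min_le: "phi_min \<le> phi$i"
  unfolding phi_min_def by simp

lemma norm_factor_pos: "norm_factor > 0"
  unfolding norm_factor_def using phi_min_pos by simp

lemma inner_phi_nonneg: "comp_le 0 v \<Longrightarrow> phi \<bullet> v \<ge> 0"
  unfolding inner_vec_def comp_le_def by (intro sum_nonneg) (simp add: phi_pos less_imp_le)

lemma phi_min_mult_le_inner: assumes "comp_le 0 v" shows "phi_min * v$i \<le> phi \<bullet> v"
proof -
  have "phi_min * v$i \<le> phi$i * v$i"
    using assms phi_min_le by (simp add: comp_le_def mult_right_mono)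
  also have "\<dots> \<le> (\<Sum>j\<in>UNIV. phi$j * v$j)"
    by (rule member_le_sum) (use assms phi_pos in \<open>auto simp: comp_le_def less_imp_le\<close>)
  finally show ?thesis by (simp add: inner_vec_def)
qed

lemma norm_le_norm_factor: assumes "comp_le 0 v" shows "norm v \<le> norm_factor * (phi \<bullet> v)"
proof -
  have "norm v \<le> (\<Sum>i\<in>UNIV. \<bar>v$i\<bar>)" by (rule norm_le_l1_cart)
  also have "\<dots> \<le> (\<Sum>i\<in>(UNIV::'n set). (phi \<bullet> v) / phi_min)"
  proof (rule sum_mono)
    fix i
    have "v$i \<le> (phi \<bullet> v) / phi_min"
      using phi_min_mult_le_inner[OF assms] phi_min_pos by (simp add: pos_le_divide_eq mult.commute)
    then show "\<bar>v$i\<bar> \<le> (phi \<bullet> v) / phi_min" using assms by (simp add: comp_le_def)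
  qed
  also have "\<dots> = norm_factor * (phi \<bullet> v)" by (simp add: norm_factor_def)
  finally show ?thesis .
qed

lemma inner_phi_le_sum: assumes "comp_le 0 v" shows "phi \<bullet> v \<le> (\<Sum>i\<in>UNIV. v$i)"
proof -
  have "phi$i * v$i \<le> v$i" for i
    using mult_right_mono[of "phi$i" 1 "v$i"] component_le_norm_cart[of phi i] phi_norm assms
    by (simp add: comp_le_def)
  then show ?thesis by (simp add: inner_vec_def sum_mono)
qed

lemma inner_phi_pos: assumes "comp_le 0 v" "v \<noteq> 0" shows "phi \<bullet> v > 0"
proof -
  obtain i where "v$i \<noteq> 0" using assms(2) by (auto simp: vec_eq_iff)
  then have "v$i > 0" using assms(1) by (simp add: comp_le_def less_le)
  then have "0 < phi_min * v$i" using phi_min_pos by simp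
  then show ?thesis using phi_min_mult_le_inner[OF assms(1), of i] by linarith
qed

lemma abs_inner_phi_le_norm: "\<bar>phi \<bullet> w\<bar> \<le> norm w"
  using Cauchy_Schwarz_ineq2[of phi w] phi_norm by simp

lemma abs_inner_phi_perturbation_le:
  assumes "comp_le 0 v" shows "\<bar>phi \<bullet> perturbation v\<bar> \<le> B * (phi \<bullet> v)"
proof -
  have "\<bar>phi \<bullet> perturbation v\<bar> \<le> (\<Sum>i\<in>UNIV. \<bar>phi$i * (psi i v * v$i)\<bar>)"
    by (simp add: inner_vec_def perturbation_def sum_abs del: abs_mult)
  also have "\<dots> \<le> (\<Sum>i\<in>UNIV. B * (phi$i * v$i))"
  proof (intro sum_mono)
    fix i
    have "\<bar>phi$i * (psi i v * v$i)\<bar> = \<bar>psi i v\<bar> * (phi$i * v$i)"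
      using assms phi_pos[of i] by (simp add: comp_le_def abs_mult)
    also have "\<dots> \<le> B * (phi$i * v$i)"
      using psi_bdd assms phi_pos[of i] by (intro mult_right_mono) (auto simp: comp_le_def)
    finally show "\<bar>phi$i * (psi i v * v$i)\<bar> \<le> B * (phi$i * v$i)" .
  qed
  also have "\<dots> = B * (phi \<bullet> v)" by (simp add: inner_vec_def sum_distrib_left)
  finally show ?thesis .
qed

lemma small_amplitude_alpha_le:
  obtains a where "a > 0" "a \<le> 1" "\<And>v. comp_le 0 v \<Longrightarrow> phi \<bullet> v < a \<Longrightarrow> alpha v \<le> K * lam / 4"
proof -
  have "K * lam / 4 > 0" using K_pos lam_pos by simp
  then obtain d where d: "d > 0" "\<forall>x. dist x 0 < d \<longrightarrow> dist (alpha x) (alpha 0) < K * lam / 4"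
    using has_derivative_continuous[OF alpha_der, of 0] unfolding continuous_at_eps_delta by blast
  define a where "a = min 1 (d / (norm_factor + 1))"
  have "alpha v \<le> K * lam / 4" if "comp_le 0 v" "phi \<bullet> v < a" for v
  proof -
    have "norm v \<le> norm_factor * (phi \<bullet> v)" by (rule norm_le_norm_factor[OF that(1)])
    also have "\<dots> \<le> norm_factor * (d / (norm_factor + 1))"
      using that norm_factor_pos by (intro mult_left_mono) (auto simp: a_def)
    also have "\<dots> < d" using norm_factor_pos d by (simp add: field_simps)
    finally show ?thesis using d alpha_0 by (auto simp: dist_real_def)
  qed
  moreover have "a > 0" "a \<le> 1" using d norm_factor_pos by (simp_all add: a_def)
  ultimately show ?thesis using that by blast
qed

lemma large_amplitude_alpha_ge:
  obtains b where "b \<ge> 1" "\<And>v. comp_le 0 v \<Longrightarrow> phi \<bullet> v \<ge> b \<Longrightarrow> alpha v \<ge> 2 * K * lam"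
proof -
  obtain R k c where Rkc: "R > 0" "k > 0" "c > 0"
    "\<forall>v. (\<forall>j. 0 \<le> v $ j) \<and> (\<Sum>j\<in>UNIV. \<bar>v $ j\<bar>) \<ge> R \<longrightarrow> c * (\<Sum>j\<in>UNIV. v $ j) powr k \<le> alpha v"
    using alpha_growth unfolding growth_bound_def by blast
  define b where "b = max 1 (max R ((2 * K * lam / c) powr (1 / k)))"
  have "alpha v \<ge> 2 * K * lam" if "comp_le 0 v" "phi \<bullet> v \<ge> b" for v
  proof -
    have sum_ge: "(\<Sum>j\<in>UNIV. v$j) \<ge> b" using inner_phi_le_sum[OF that(1)] that(2) by linarith
    have "(\<Sum>j\<in>UNIV. \<bar>v $ j\<bar>) = (\<Sum>j\<in>UNIV. v $ j)" using that(1) by (simp add: comp_le_def)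
    then have growth: "c * (\<Sum>j\<in>UNIV. v $ j) powr k \<le> alpha v"
      using Rkc(4) that(1) sum_ge by (auto simp: comp_le_def b_def)
    have "2 * K * lam / c = ((2 * K * lam / c) powr (1 / k)) powr k"
      using Rkc K_pos lam_pos by (simp add: powr_powr)
    also have "\<dots> \<le> (\<Sum>j\<in>UNIV. v $ j) powr k"
      using sum_ge Rkc by (intro powr_mono2) (auto simp: b_def)
    finally have "2 * K * lam \<le> c * (\<Sum>j\<in>UNIV. v $ j) powr k"
      using Rkc by (simp add: pos_divide_le_eq mult.commute)
    then show ?thesis using growth by linarith
  qed
  moreover have "b \<ge> 1" by (simp add: b_def)
  ultimately show ?thesis using that by blast
qed

lemma psi_uniform_lipschitz:
  obtains L where "L \<ge> 0"
    "\<And>i x y. x \<in> cball 0 R \<Longrightarrow> y \<in> cball 0 R \<Longrightarrow> \<bar>psi i x - psi i y\<bar> \<le> L * norm (x - y)"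
proof -
  have "\<exists>L. L \<ge> 0 \<and> (\<forall>x y. x \<in> cball 0 R \<longrightarrow> y \<in> cball 0 R \<longrightarrow>
      \<bar>psi i x - psi i y\<bar> \<le> L * norm (x - y))" for i
    by (rule lipschitz_on_cball_if_grad[OF psi_der gpsi_cont]) blast
  then obtain Lf where Lf: "\<And>i. Lf i \<ge> 0"
    "\<And>i x y. x \<in> cball 0 R \<Longrightarrow> y \<in> cball 0 R \<Longrightarrow> \<bar>psi i x - psi i y\<bar> \<le> Lf i * norm (x - y)"
    by metis
  define L where "L = (\<Sum>i\<in>UNIV. Lf i)"
  have "Lf i \<le> L" for i unfolding L_def by (rule member_le_sum) (auto simp: Lf)
  then have "\<bar>psi i x - psi i y\<bar> \<le> L * norm (x - y)"
    if "x \<in> cball 0 R" "y \<in> cball 0 R" for i x y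
    using Lf(2)[OF that, of i] by (meson mult_right_mono norm_ge_zero order_trans)
  moreover have "L \<ge> 0" unfolding L_def by (simp add: Lf sum_nonneg)
  ultimately show ?thesis using that by blast
qed

definition profiles :: "(real^'n) set" where "profiles = {q. comp_le 0 q \<and> phi \<bullet> q = 1}"

lemma norm_profile_le: "q \<in> profiles \<Longrightarrow> norm q \<le> norm_factor"
  using norm_le_norm_factor[of q] by (simp add: profiles_def)

lemma compact_profiles: "compact profiles"
proof -
  have "profiles = {q. \<forall>i. 0 \<le> q$i} \<inter> {q. phi \<bullet> q = 1}"
    by (auto simp: profiles_def comp_le_def)
  moreover have "closed {q::real^'n. \<forall>i. 0 \<le> q$i}"
    by (intro closed_Collect_all closed_Collect_le continuous_intros)
  moreover have "closed {q::real^'n. phi \<bullet> q = 1}"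
    by (intro closed_Collect_eq continuous_intros)
  ultimately have "closed profiles" by auto
  moreover have "profiles \<subseteq> cball 0 norm_factor" using norm_profile_le by auto
  ultimately show ?thesis by (meson bounded_cball bounded_subset compact_eq_bounded_closed)
qed

lemma phi_in_profiles: "phi \<in> profiles"
  using phi_pos phi_norm
  by (simp add: profiles_def comp_le_def less_imp_le power2_norm_eq_inner[symmetric])

lemma alpha_ray_deriv:
  "((\<lambda>s. alpha (s *\<^sub>R q)) has_real_derivative (ga (s *\<^sub>R q) \<bullet> q)) (at s)"
proof -
  have "((\<lambda>s. alpha (s *\<^sub>R q)) has_derivative (\<lambda>h. ga (s *\<^sub>R q) \<bullet> (h *\<^sub>R q))) (at s)"
    by (rule has_derivative_compose[of "\<lambda>s. s *\<^sub>R q" _ _ _ alpha, OF _ alpha_der])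
       (auto intro!: derivative_eq_intros)
  moreover have "(\<lambda>h. ga (s *\<^sub>R q) \<bullet> (h *\<^sub>R q)) = (\<lambda>h. (ga (s *\<^sub>R q) \<bullet> q) * h)"
    by (simp add: fun_eq_iff)
  ultimately show ?thesis by (simp add: has_field_derivative_def)
qed

lemma alpha_ray_diff_ge:
  assumes "lo < hi" and grad: "\<And>s. s \<in> {lo..hi} \<Longrightarrow> m \<le> ga (s *\<^sub>R q) \<bullet> q"
  shows "(alpha (hi *\<^sub>R q) - alpha (lo *\<^sub>R q)) * (hi - lo) \<ge> m * (hi - lo)^2"
proof -
  define h where "h = (\<lambda>s. alpha (s *\<^sub>R q))"
  obtain l z where lz: "lo < z" "z < hi" "DERIV h z :> l" "h hi - h lo = (hi - lo) * l"
    using MVT[OF \<open>lo < hi\<close>, of h] alpha_ray_deriv continuous_at_imp_continuous_on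
      DERIV_isCont real_differentiable_def unfolding h_def by metis
  have "l = ga (z *\<^sub>R q) \<bullet> q" using lz(3) alpha_ray_deriv DERIV_unique unfolding h_def by metis
  then have "m \<le> l" using grad[of z] lz by auto
  then have "(hi - lo)^2 * m \<le> (hi - lo)^2 * l" by (simp add: mult_left_mono)
  then show ?thesis using lz(4) by (simp add: h_def power2_eq_square mult_ac)
qed

lemma inner_grad_profile_pos: "q \<in> profiles \<Longrightarrow> ga x \<bullet> q > 0"
proof -
  assume q: "q \<in> profiles"
  then have "q \<noteq> 0" by (auto simp: profiles_def)
  then obtain i where "q$i \<noteq> 0" by (auto simp: vec_eq_iff)
  then have "q$i > 0" using q by (auto simp: profiles_def comp_le_def less_le)
  then have "0 < (\<Sum>j\<in>UNIV. ga x $ j * q $ j)"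
    using ga_pos q by (intro sum_pos2[of UNIV i]) (auto simp: profiles_def comp_le_def less_imp_le)
  then show ?thesis by (simp add: inner_vec_def)
qed

text \<open>The modulus is the minimum of the radial derivative of alpha over the compact set
  \<open>{a..b} \<times> profiles\<close>, which is positive because the gradient of alpha is.\<close>
lemma alpha_ray_strongly_monotone:
  assumes "a \<le> b"
  obtains m where "m > 0" "\<And>p p' q. p \<in> {a..b} \<Longrightarrow> p' \<in> {a..b} \<Longrightarrow> q \<in> profiles \<Longrightarrow>
           (alpha (p *\<^sub>R q) - alpha (p' *\<^sub>R q)) * (p - p') \<ge> m * (p - p')^2"
proof -
  define T where "T = {a..b} \<times> profiles"
  have "compact T" unfolding T_def by (intro compact_Times compact_Icc compact_profiles)
  moreover have "T \<noteq> {}" using assms phi_in_profiles by (auto simp: T_def)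
  moreover have "continuous_on T (\<lambda>z. ga (fst z *\<^sub>R snd z) \<bullet> snd z)"
    by (intro continuous_intros continuous_on_compose2[OF ga_cont]) auto
  ultimately obtain z0 where z0: "z0 \<in> T"
    "\<forall>z\<in>T. ga (fst z0 *\<^sub>R snd z0) \<bullet> snd z0 \<le> ga (fst z *\<^sub>R snd z) \<bullet> snd z"
    using continuous_attains_inf by blast
  define m where "m = ga (fst z0 *\<^sub>R snd z0) \<bullet> snd z0"
  have "(alpha (hi *\<^sub>R q) - alpha (lo *\<^sub>R q)) * (hi - lo) \<ge> m * (hi - lo)^2"
    if "lo < hi" "lo \<in> {a..b}" "hi \<in> {a..b}" "q \<in> profiles" for lo hi q
    using that z0(2) by (intro alpha_ray_diff_ge) (force simp: m_def T_def)+
  then have "(alpha (p *\<^sub>R q) - alpha (p' *\<^sub>R q)) * (p - p') \<ge> m * (p - p')^2"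
    if "p \<in> {a..b}" "p' \<in> {a..b}" "q \<in> profiles" for p p' q
    using that by (cases p p' rule: linorder_cases)
      (force simp: power2_commute algebra_simps)+
  moreover have "m > 0" unfolding m_def using inner_grad_profile_pos z0(1) by (auto simp: T_def)
  ultimately show ?thesis using that by blast
qed

end

context dispersal_system
begin

definition profile :: "real^'n \<Rightarrow> real^'n" where
  "profile v = (1 / (phi \<bullet> v)) *\<^sub>R v"

definition perturbation_profile :: "real^'n \<Rightarrow> real^'n" where
  "perturbation_profile v = (\<chi> i. psi i v * profile v $ i)"

definition perturbation_tangent :: "real^'n \<Rightarrow> real^'n" where
  "perturbation_tangent v = perturbation_profile v - (phi \<bullet> perturbation_profile v) *\<^sub>R profile v"

definition profile_deriv :: "real \<Rightarrow> real^'n \<Rightarrow> real^'n" where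
  "profile_deriv e v = (1 / (phi \<bullet> v)) *\<^sub>R rhs e v - ((phi \<bullet> rhs e v) / (phi \<bullet> v)^2) *\<^sub>R v"

lemma scaleR_profile: "phi \<bullet> v \<noteq> 0 \<Longrightarrow> (phi \<bullet> v) *\<^sub>R profile v = v"
  by (simp add: profile_def)

lemma perturbation_eq_scaleR: "phi \<bullet> v \<noteq> 0 \<Longrightarrow> perturbation v = (phi \<bullet> v) *\<^sub>R perturbation_profile v"
  by (simp add: perturbation_def perturbation_profile_def profile_def vec_eq_iff)

lemma inner_phi_profile: "phi \<bullet> v \<noteq> 0 \<Longrightarrow> phi \<bullet> profile v = 1"
  by (simp add: profile_def)

lemma profile_in_profiles: "comp_le 0 v \<Longrightarrow> phi \<bullet> v > 0 \<Longrightarrow> profile v \<in> profiles"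
  by (simp add: profiles_def comp_le_def profile_def)

lemma abs_profile_nth_le: "q \<in> profiles \<Longrightarrow> \<bar>q $ i\<bar> \<le> norm_factor"
  using norm_profile_le component_le_norm_cart order_trans by blast

lemma mem_cball_if_amplitude_le:
  assumes "comp_le 0 v" "phi \<bullet> v \<le> c" shows "v \<in> cball 0 (c * norm_factor)"
proof -
  have "norm v \<le> norm_factor * (phi \<bullet> v)" by (rule norm_le_norm_factor[OF assms(1)])
  also have "\<dots> \<le> norm_factor * c" using assms(2) norm_factor_pos by simp
  finally show ?thesis by (simp add: mult.commute)
qed

lemma rhs_eq_scaleR:
  assumes "phi \<bullet> v \<noteq> 0"
  shows "rhs e v = (phi \<bullet> v) *\<^sub>R (linearization r mu *v profile v - (alpha v / K) *\<^sub>R profile v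
      - (e / K) *\<^sub>R perturbation_profile v)"
proof -
  have "rhs e v = linearization r mu *v ((phi \<bullet> v) *\<^sub>R profile v)
      - (alpha v / K) *\<^sub>R ((phi \<bullet> v) *\<^sub>R profile v) - (e / K) *\<^sub>R ((phi \<bullet> v) *\<^sub>R perturbation_profile v)"
    using rhs_eq[of e v] scaleR_profile[OF assms] perturbation_eq_scaleR[OF assms] by metis
  then show ?thesis by (simp add: matrix_vector_mult_scaleR algebra_simps)
qed

lemma inner_phi_rhs_eq:
  assumes "phi \<bullet> v \<noteq> 0"
  shows "phi \<bullet> rhs e v = (phi \<bullet> v) * (lam - alpha v / K - (e / K) * (phi \<bullet> perturbation_profile v))"
  using rhs_eq_scaleR[OF assms, of e] inner_phi_profile[OF assms]
  by (simp add: inner_diff_right inner_phi_linearization)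

lemma profile_deriv_eq:
  assumes "phi \<bullet> v \<noteq> 0"
  shows "profile_deriv e v
    = linearization r mu *v profile v - lam *\<^sub>R profile v - (e / K) *\<^sub>R perturbation_tangent v"
proof -
  define W where "W = linearization r mu *v profile v - (alpha v / K) *\<^sub>R profile v
      - (e / K) *\<^sub>R perturbation_profile v"
  have rhs_W: "rhs e v = (phi \<bullet> v) *\<^sub>R W" using rhs_eq_scaleR[OF assms] by (simp add: W_def)
  have "profile_deriv e v = (1 / (phi \<bullet> v)) *\<^sub>R ((phi \<bullet> v) *\<^sub>R W)
      - (((phi \<bullet> v) * (phi \<bullet> W)) / (phi \<bullet> v)^2) *\<^sub>R ((phi \<bullet> v) *\<^sub>R profile v)"
    unfolding profile_deriv_def using rhs_W scaleR_profile[OF assms] by (metis inner_scaleR_right)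
  also have "\<dots> = W - (phi \<bullet> W) *\<^sub>R profile v"
    using assms by (simp add: power2_eq_square)
  also have "\<dots> = linearization r mu *v profile v - lam *\<^sub>R profile v - (e / K) *\<^sub>R perturbation_tangent v"
    using inner_phi_profile[OF assms]
    by (simp add: W_def perturbation_tangent_def inner_diff_right inner_phi_linearization
        algebra_simps scaleR_diff_left)
  finally show ?thesis .
qed

lemma abs_inner_phi_perturbation_profile_le:
  assumes "comp_le 0 v" "phi \<bullet> v > 0" shows "\<bar>phi \<bullet> perturbation_profile v\<bar> \<le> B"
proof -
  have "\<bar>(phi \<bullet> v) * (phi \<bullet> perturbation_profile v)\<bar> \<le> B * (phi \<bullet> v)"
    using abs_inner_phi_perturbation_le[OF assms(1)] perturbation_eq_scaleR assms(2) by simp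
  then show ?thesis using assms(2) by (simp add: abs_mult mult.commute)
qed

lemma norm_perturbation_profile_diff_le:
  assumes q: "profile v \<in> profiles" "profile w \<in> profiles"
    and lip: "\<And>i. \<bar>psi i v - psi i w\<bar> \<le> L * norm (v - w)"
  shows "norm (perturbation_profile v - perturbation_profile w)
    \<le> real CARD('n) * (B * norm (profile v - profile w) + L * norm (v - w) * norm_factor)"
proof -
  have "norm (perturbation_profile v - perturbation_profile w)
      \<le> (\<Sum>i\<in>UNIV. \<bar>(perturbation_profile v - perturbation_profile w) $ i\<bar>)"
    by (rule norm_le_l1_cart)
  also have "\<dots> \<le> (\<Sum>i\<in>(UNIV::'n set). B * norm (profile v - profile w) + L * norm (v - w) * norm_factor)"
  proof (rule sum_mono)
    fix i
    have eq: "(perturbation_profile v - perturbation_profile w) $ i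
        = psi i v * (profile v $ i - profile w $ i) + (psi i v - psi i w) * profile w $ i"
      by (simp add: perturbation_profile_def algebra_simps)
    moreover have "\<bar>psi i v * (profile v $ i - profile w $ i)\<bar> \<le> B * norm (profile v - profile w)"
    proof -
      have "\<bar>profile v $ i - profile w $ i\<bar> \<le> norm (profile v - profile w)"
        using component_le_norm_cart[of "profile v - profile w" i] by simp
      then show ?thesis unfolding abs_mult using psi_bdd B_nonneg by (intro mult_mono) auto
    qed
    moreover have "\<bar>(psi i v - psi i w) * profile w $ i\<bar> \<le> L * norm (v - w) * norm_factor"
      unfolding abs_mult using lip[of i] abs_profile_nth_le[OF q(2), of i] by (intro mult_mono) auto
    ultimately show "\<bar>(perturbation_profile v - perturbation_profile w) $ i\<bar>
        \<le> B * norm (profile v - profile w) + L * norm (v - w) * norm_factor"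
      unfolding eq by (meson abs_triangle_ineq add_mono order_trans)
  qed
  also have "\<dots> = real CARD('n) * (B * norm (profile v - profile w) + L * norm (v - w) * norm_factor)"
    by simp
  finally show ?thesis .
qed

lemma norm_perturbation_tangent_diff_le:
  assumes "comp_le 0 v" "phi \<bullet> v > 0" "profile w \<in> profiles"
  shows "norm (perturbation_tangent v - perturbation_tangent w)
    \<le> (1 + norm_factor) * norm (perturbation_profile v - perturbation_profile w)
      + B * norm (profile v - profile w)"
proof -
  let ?G = "perturbation_profile v" and ?G' = "perturbation_profile w"
  have eq: "perturbation_tangent v - perturbation_tangent w
      = (?G - ?G') - ((phi \<bullet> ?G) *\<^sub>R (profile v - profile w) + (phi \<bullet> (?G - ?G')) *\<^sub>R profile w)"
    by (simp add: perturbation_tangent_def algebra_simps inner_diff_right)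
  have "norm (perturbation_tangent v - perturbation_tangent w)
      \<le> norm (?G - ?G') + (norm ((phi \<bullet> ?G) *\<^sub>R (profile v - profile w))
        + norm ((phi \<bullet> (?G - ?G')) *\<^sub>R profile w))"
    unfolding eq by (meson add_left_mono norm_triangle_ineq norm_triangle_ineq4 order_trans)
  also have "norm ((phi \<bullet> ?G) *\<^sub>R (profile v - profile w)) \<le> B * norm (profile v - profile w)"
    using abs_inner_phi_perturbation_profile_le[OF assms(1,2)] by (simp add: mult_right_mono)
  also have "norm ((phi \<bullet> (?G - ?G')) *\<^sub>R profile w) \<le> norm (?G - ?G') * norm_factor"
    using abs_inner_phi_le_norm[of "?G - ?G'"] norm_profile_le[OF assms(3)] by (simp add: mult_mono)
  finally show ?thesis by (simp add: algebra_simps)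
qed

lemma has_real_derivative_inner_phi:
  assumes "(v has_vector_derivative w) (at t within S)"
  shows "((\<lambda>t. phi \<bullet> v t) has_real_derivative (phi \<bullet> w)) (at t within S)"
  using bounded_linear.has_vector_derivative[OF bounded_linear_inner_right assms]
  by (simp add: has_real_derivative_iff_has_vector_derivative)

lemma profile_has_vector_derivative:
  assumes sol: "(v has_vector_derivative rhs e (v t)) (at t within S)" and "phi \<bullet> v t > 0"
  shows "((\<lambda>t. profile (v t)) has_vector_derivative profile_deriv e (v t)) (at t within S)"
proof -
  have "((\<lambda>t. 1 / (phi \<bullet> v t)) has_real_derivative - (phi \<bullet> rhs e (v t)) / (phi \<bullet> v t)^2)
      (at t within S)"
    using has_real_derivative_inner_phi[OF sol] \<open>phi \<bullet> v t > 0\<close>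
    by (auto intro!: derivative_eq_intros simp: power2_eq_square)
  from has_vector_derivative_scaleR[OF this sol] show ?thesis
    by (simp add: profile_def profile_deriv_def algebra_simps)
qed

definition lyapunov :: "real \<Rightarrow> real^'n \<Rightarrow> real^'n \<Rightarrow> real" where
  "lyapunov \<theta> w v = (phi \<bullet> v - phi \<bullet> w)^2 + \<theta> * (norm (profile v - profile w))^2"

lemma lyapunov_has_derivative:
  assumes sol: "(v has_vector_derivative rhs e (v t)) (at t within S)" and "phi \<bullet> v t > 0"
  shows "((\<lambda>t. lyapunov \<theta> w (v t)) has_real_derivative
      2 * (phi \<bullet> v t - phi \<bullet> w) * (phi \<bullet> rhs e (v t))
      + \<theta> * (2 * ((profile (v t) - profile w) \<bullet> profile_deriv e (v t)))) (at t within S)"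
proof -
  have "((\<lambda>t. profile (v t) - profile w) has_vector_derivative profile_deriv e (v t)) (at t within S)"
    using profile_has_vector_derivative[OF sol \<open>phi \<bullet> v t > 0\<close>] by (auto intro!: derivative_eq_intros)
  from bounded_bilinear.has_vector_derivative[OF bounded_bilinear_inner this this]
  have profile_part: "((\<lambda>t. (norm (profile (v t) - profile w))^2) has_real_derivative
      2 * ((profile (v t) - profile w) \<bullet> profile_deriv e (v t))) (at t within S)"
    by (simp add: has_real_derivative_iff_has_vector_derivative inner_commute power2_norm_eq_inner)
  have amplitude_part: "((\<lambda>t. (phi \<bullet> v t - phi \<bullet> w)^2) has_real_derivative
      2 * (phi \<bullet> v t - phi \<bullet> w) * (phi \<bullet> rhs e (v t))) (at t within S)"
    using has_real_derivative_inner_phi[OF sol] by (auto intro!: derivative_eq_intros)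
  show ?thesis
    unfolding lyapunov_def using DERIV_add[OF amplitude_part DERIV_cmult[OF profile_part, of \<theta>]]
    by simp
qed

lemma mu_le_total: "mu$i$j \<le> (\<Sum>i\<in>UNIV. \<Sum>j\<in>UNIV. mu$i$j)"
proof -
  have "mu$i$j \<le> (\<Sum>j\<in>UNIV. mu$i$j)" by (rule member_le_sum) (auto simp: mu_nonneg)
  also have "\<dots> \<le> (\<Sum>i\<in>UNIV. \<Sum>j\<in>UNIV. mu$i$j)"
    by (rule member_le_sum) (auto simp: mu_nonneg sum_nonneg)
  finally show ?thesis .
qed

lemma rhs_negative_part_le:
  assumes C: "\<And>i. \<bar>r$i - (\<Sum>j\<in>UNIV. mu$i$j) - (alpha v + e * psi i v) / K\<bar> \<le> C"
  shows "(\<Sum>i\<in>UNIV. 2 * min (v$i) 0 * rhs e v $ i)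
    \<le> (2 * C + 4 * real CARD('n) * (\<Sum>i\<in>UNIV. \<Sum>j\<in>UNIV. mu$i$j)) * (\<Sum>i\<in>UNIV. (min (v$i) 0)^2)"
proof -
  define M where "M = (\<Sum>i\<in>UNIV. \<Sum>j\<in>UNIV. mu$i$j)"
  define n where "n = (\<lambda>i. min (v$i) 0)"
  define c where "c = (\<lambda>i. r$i - (\<Sum>j\<in>UNIV. mu$i$j) - (alpha v + e * psi i v) / K)"
  have diagonal: "c i * (n i * v$i) \<le> C * (n i)^2" for i
  proof -
    have "c i * (n i * v$i) = c i * (n i)^2" by (simp add: n_def min_def power2_eq_square)
    also have "\<dots> \<le> C * (n i)^2" using C[of i] by (intro mult_right_mono) (auto simp: c_def)
    finally show ?thesis .
  qed
  have off_diagonal: "mu$i$j * (n i * v$j) \<le> M * ((n i)^2 + (n j)^2)" for i j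
  proof -
    have "n i * v$j \<le> n i * n j"
      by (cases "v$i \<le> 0"; cases "v$j \<le> 0") (auto simp: n_def min_def mult_le_0_iff mult_left_mono_neg)
    also have "2 * (n i * n j) \<le> (n i)^2 + (n j)^2"
      using sum_squares_bound[of "n i" "n j"] by (simp add: mult.assoc)
    then have "n i * n j \<le> (n i)^2 + (n j)^2"
      using zero_le_power2[of "n i"] zero_le_power2[of "n j"] by linarith
    finally have "mu$i$j * (n i * v$j) \<le> mu$i$j * ((n i)^2 + (n j)^2)"
      using mu_nonneg by (rule mult_left_mono)
    also have "\<dots> \<le> M * ((n i)^2 + (n j)^2)"
      using mu_le_total by (intro mult_right_mono) (auto simp: M_def)
    finally show ?thesis .
  qed
  have "2 * n i * rhs e v $ i \<le> 2 * (C * (n i)^2 + (\<Sum>j\<in>UNIV. M * ((n i)^2 + (n j)^2)))" for i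
  proof -
    have "n i * rhs e v $ i = c i * (n i * v$i) + (\<Sum>j\<in>UNIV. mu$i$j * (n i * v$j))"
      unfolding rhs_nth c_def by (simp add: algebra_simps sum_distrib_left)
    also have "\<dots> \<le> C * (n i)^2 + (\<Sum>j\<in>UNIV. M * ((n i)^2 + (n j)^2))"
      using diagonal off_diagonal by (intro add_mono sum_mono)
    finally show ?thesis by simp
  qed
  then have "(\<Sum>i\<in>UNIV. 2 * n i * rhs e v $ i)
      \<le> (\<Sum>i\<in>UNIV. 2 * (C * (n i)^2 + (\<Sum>j\<in>UNIV. M * ((n i)^2 + (n j)^2))))"
    by (rule sum_mono)
  also have "\<dots> = (2 * C + 4 * real CARD('n) * M) * (\<Sum>i\<in>UNIV. (n i)^2)"
    by (simp add: sum.distrib sum_distrib_left sum_distrib_right algebra_simps)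
  finally show ?thesis by (simp add: n_def M_def)
qed

lemma diagonal_coefficients_bounded:
  fixes v :: "real \<Rightarrow> real^'n"
  assumes "continuous_on {0..t} v"
  obtains C where
    "\<And>i s. s \<in> {0..t} \<Longrightarrow> \<bar>r$i - (\<Sum>j\<in>UNIV. mu$i$j) - (alpha (v s) + e * psi i (v s)) / K\<bar> \<le> C"
proof -
  define c where "c = (\<lambda>i s. r$i - (\<Sum>j\<in>UNIV. mu$i$j) - (alpha (v s) + e * psi i (v s)) / K)"
  have "continuous_on {0..t} (\<lambda>s. \<Sum>i\<in>UNIV. \<bar>c i s\<bar>)"
    unfolding c_def using K_pos
    by (intro continuous_intros continuous_on_compose2[OF alpha_cont assms]
        continuous_on_compose2[OF psi_cont assms]) auto
  then have "compact ((\<lambda>s. \<Sum>i\<in>UNIV. \<bar>c i s\<bar>) ` {0..t})"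
    by (rule compact_continuous_image[OF _ compact_Icc])
  then obtain C where C: "\<forall>s\<in>{0..t}. (\<Sum>i\<in>UNIV. \<bar>c i s\<bar>) \<le> C"
    by (auto dest!: compact_imp_bounded simp: bounded_iff)
  have "\<bar>c i s\<bar> \<le> C" if "s \<in> {0..t}" for i s
    using member_le_sum[of i UNIV "\<lambda>i. \<bar>c i s\<bar>"] C that by fastforce
  then show ?thesis by (intro that) (simp add: c_def)
qed

text \<open>The sum of squared negative parts obeys a linear differential inequality on compact time
  intervals and vanishes initially, hence stays zero by Gronwall's inequality.\<close>
lemma solution_nonneg:
  assumes sol: "\<And>t. t \<ge> 0 \<Longrightarrow> (v has_vector_derivative rhs e (v t)) (at t within {0..})"
    and "comp_le 0 (v 0)" and "t \<ge> 0"
  shows "comp_le 0 (v t)"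
proof -
  have "continuous_on {0..} v"
    using sol has_vector_derivative_continuous continuous_on_eq_continuous_within
    by (metis atLeast_iff)
  then have "continuous_on {0..t} v" by (rule continuous_on_subset) auto
  then obtain C where C:
    "\<And>i s. s \<in> {0..t} \<Longrightarrow> \<bar>r$i - (\<Sum>j\<in>UNIV. mu$i$j) - (alpha (v s) + e * psi i (v s)) / K\<bar> \<le> C"
    using diagonal_coefficients_bounded[where e = e] by blast
  define S where "S = (\<lambda>s. \<Sum>i\<in>UNIV. (min (v s $ i) 0)^2)"
  define S' where "S' = (\<lambda>s. \<Sum>i\<in>UNIV. 2 * min (v s $ i) 0 * rhs e (v s) $ i)"
  define L where "L = 2 * C + 4 * real CARD('n) * (\<Sum>i\<in>UNIV. \<Sum>j\<in>UNIV. mu$i$j)"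
  have S_der: "(S has_real_derivative S' s) (at s within {0..})" if "s \<ge> 0" for s
  proof -
    have "((\<lambda>s. (min (v s $ i) 0)^2) has_real_derivative 2 * min (v s $ i) 0 * rhs e (v s) $ i)
        (at s within {0..})" for i
      using DERIV_chain2[OF has_real_derivative_min_zero_square has_real_derivative_vec_nth[OF sol[OF that]]]
      by simp
    then show ?thesis unfolding S_def S'_def has_real_derivative_iff_has_vector_derivative
      by (intro has_vector_derivative_sum) auto
  qed
  then have S_der_Icc: "(S has_real_derivative S' s) (at s within {0..t})" if "s \<in> {0..t}" for s
    using that by (intro has_field_derivative_subset[OF S_der]) auto
  have S'_le: "S' s \<le> L * S s" if "s \<in> {0..t}" for s
    using rhs_negative_part_le[where v="v s" and C=C and e=e] C[OF that]
    by (simp add: S_def S'_def L_def)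
  have "S t \<le> exp (L * (t - 0)) * S 0"
    using deriv_le_linear_imp_exp_bound[OF S_der_Icc S'_le \<open>0 \<le> t\<close>] .
  moreover have "S 0 = 0" using \<open>comp_le 0 (v 0)\<close> by (simp add: S_def comp_le_def)
  moreover have "S t \<ge> 0" by (simp add: S_def sum_nonneg)
  ultimately have "S t = 0" by simp
  then have "\<forall>i\<in>UNIV. (min (v t $ i) 0)^2 = 0"
    unfolding S_def by (subst sum_nonneg_eq_0_iff[symmetric]) auto
  then have "min (v t $ i) 0 = 0" for i by simp
  then show ?thesis unfolding comp_le_def by (metis min.absorb_iff2 zero_index)
qed

end

section \<open>Dissipation estimates\<close>

locale dispersal_system_bounds = dispersal_system K r mu alpha ga psi gpsi B phi lam gap
  for K r and mu :: "real^'n^'n" and alpha ga psi gpsi B phi lam gap +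
  fixes a b A Lp m :: real
  assumes a_pos: "a > 0" and b_ge1: "b \<ge> 1"
    and small_amplitude: "\<And>v. comp_le 0 v \<Longrightarrow> phi \<bullet> v < a \<Longrightarrow> alpha v \<le> K * lam / 4"
    and large_amplitude: "\<And>v. comp_le 0 v \<Longrightarrow> phi \<bullet> v \<ge> b \<Longrightarrow> alpha v \<ge> 2 * K * lam"
    and A_nonneg: "A \<ge> 0"
    and alpha_lipschitz: "\<And>x y. x \<in> cball 0 (b * norm_factor) \<Longrightarrow> y \<in> cball 0 (b * norm_factor) \<Longrightarrow>
      \<bar>alpha x - alpha y\<bar> \<le> A * norm (x - y)"
    and Lp_nonneg: "Lp \<ge> 0"
    and psi_lipschitz: "\<And>i x y. x \<in> cball 0 (b * norm_factor) \<Longrightarrow> y \<in> cball 0 (b * norm_factor) \<Longrightarrow>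
      \<bar>psi i x - psi i y\<bar> \<le> Lp * norm (x - y)"
    and m_pos: "m > 0"
    and alpha_ray_monotone: "\<And>p p' q. p \<in> {a..b} \<Longrightarrow> p' \<in> {a..b} \<Longrightarrow> q \<in> profiles \<Longrightarrow>
      (alpha (p *\<^sub>R q) - alpha (p' *\<^sub>R q)) * (p - p') \<ge> m * (p - p')^2"
begin

definition eps_amplitude :: real where "eps_amplitude = K * lam / (4 * (B + 1))"

lemma eps_amplitude_pos: "eps_amplitude > 0"
  using K_pos lam_pos B_nonneg by (simp add: eps_amplitude_def)

lemma perturbation_amplitude_le:
  assumes "0 \<le> e" "e \<le> eps_amplitude" "comp_le 0 v"
  shows "(e / K) * \<bar>phi \<bullet> perturbation v\<bar> \<le> (lam / 4) * (phi \<bullet> v)"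
proof -
  have "e * B \<le> eps_amplitude * B" using assms B_nonneg by (simp add: mult_right_mono)
  also have "\<dots> = K * lam / 4 * (B / (B + 1))" using B_nonneg by (simp add: eps_amplitude_def field_simps)
  also have "\<dots> \<le> K * lam / 4 * 1" using B_nonneg K_pos lam_pos by (intro mult_left_mono) auto
  finally have eB: "e * B / K \<le> lam / 4" using K_pos by (simp add: pos_divide_le_eq mult.commute)
  have "(e / K) * \<bar>phi \<bullet> perturbation v\<bar> \<le> (e / K) * (B * (phi \<bullet> v))"
    using assms K_pos abs_inner_phi_perturbation_le[OF assms(3)] by (intro mult_left_mono) auto
  also have "\<dots> = (e * B / K) * (phi \<bullet> v)" by simp
  also have "\<dots> \<le> (lam / 4) * (phi \<bullet> v)"
    using eB inner_phi_nonneg[OF assms(3)] by (intro mult_right_mono) auto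
  finally show ?thesis .
qed

lemma inner_phi_rhs_ge_if_small:
  assumes "0 \<le> e" "e \<le> eps_amplitude" "comp_le 0 v" "phi \<bullet> v < a"
  shows "phi \<bullet> rhs e v \<ge> (lam / 2) * (phi \<bullet> v)"
proof -
  have "alpha v / K \<le> lam / 4"
    using small_amplitude[OF assms(3,4)] K_pos by (simp add: divide_le_eq mult.commute)
  then have "(alpha v / K) * (phi \<bullet> v) \<le> (lam / 4) * (phi \<bullet> v)"
    by (rule mult_right_mono) (rule inner_phi_nonneg[OF assms(3)])
  moreover have "(e / K) * (phi \<bullet> perturbation v) \<le> (e / K) * \<bar>phi \<bullet> perturbation v\<bar>"
    using assms(1) K_pos by (intro mult_left_mono) auto
  moreover have "lam * (phi \<bullet> v) \<ge> 0" using lam_pos inner_phi_nonneg[OF assms(3)] by simp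
  ultimately show ?thesis
    using inner_phi_rhs[of e v] perturbation_amplitude_le[OF assms(1-3)] by (simp add: algebra_simps)
qed

lemma inner_phi_rhs_le_if_large:
  assumes "0 \<le> e" "e \<le> eps_amplitude" "comp_le 0 v" "phi \<bullet> v \<ge> b"
  shows "phi \<bullet> rhs e v \<le> - (lam / 2) * (phi \<bullet> v)"
proof -
  have "alpha v / K \<ge> 2 * lam"
    using large_amplitude[OF assms(3,4)] K_pos by (simp add: le_divide_eq mult_ac)
  then have "(alpha v / K) * (phi \<bullet> v) \<ge> (2 * lam) * (phi \<bullet> v)"
    by (rule mult_right_mono) (rule inner_phi_nonneg[OF assms(3)])
  moreover have "(e / K) * (- (phi \<bullet> perturbation v)) \<le> (e / K) * \<bar>phi \<bullet> perturbation v\<bar>"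
    using assms(1) K_pos by (intro mult_left_mono) auto
  moreover have "lam * (phi \<bullet> v) \<ge> 0" using lam_pos inner_phi_nonneg[OF assms(3)] by simp
  ultimately show ?thesis
    using inner_phi_rhs[of e v] perturbation_amplitude_le[OF assms(1-3)] by (simp add: algebra_simps)
qed

lemma stationary_amplitude_mem:
  assumes "0 \<le> e" "e \<le> eps_amplitude" "\<forall>i. w$i > 0" "rhs e w = 0"
  shows "phi \<bullet> w \<in> {a..b}"
proof -
  have w_nonneg: "comp_le 0 w" using assms(3) by (simp add: comp_le_def less_imp_le)
  have "w \<noteq> 0" using assms(3) by (metis less_irrefl zero_index)
  then have "(lam / 2) * (phi \<bullet> w) > 0" using inner_phi_pos[OF w_nonneg] lam_pos by simp
  then show ?thesis
    using inner_phi_rhs_ge_if_small[OF assms(1,2) w_nonneg] inner_phi_rhs_le_if_large[OF assms(1,2) w_nonneg]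
      assms(4) by force
qed

definition amplitude_rate :: real where "amplitude_rate = a * m / K"
definition coupling :: real where "coupling = A * b * b / K"
definition weight :: real where "weight = coupling^2 / (amplitude_rate * gap) + 1"
definition lip_perturbation :: real where
  "lip_perturbation = real CARD('n) * (B + Lp * norm_factor * (norm_factor + b))"
definition lip_tangent :: real where "lip_tangent = (1 + norm_factor) * lip_perturbation + B"
definition error_rate :: real where
  "error_rate = b * lip_perturbation / K + weight * lip_tangent / K"
definition eps0 :: real where
  "eps0 = min eps_amplitude (min amplitude_rate gap / (8 * error_rate + 1))"
definition decay_rate :: real where "decay_rate = min amplitude_rate gap / 2"

lemma lip_perturbation_nonneg: "lip_perturbation \<ge> 0"
  using B_nonneg Lp_nonneg norm_factor_pos b_ge1 by (simp add: lip_perturbation_def)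

lemma lip_tangent_nonneg: "lip_tangent \<ge> 0"
  using lip_perturbation_nonneg B_nonneg norm_factor_pos by (simp add: lip_tangent_def)

lemma amplitude_rate_pos: "amplitude_rate > 0"
  using a_pos m_pos K_pos by (simp add: amplitude_rate_def)

lemma weight_ge_1: "weight \<ge> 1"
  using amplitude_rate_pos gap_pos by (simp add: weight_def)

lemma error_rate_nonneg: "error_rate \<ge> 0"
  using lip_perturbation_nonneg lip_tangent_nonneg weight_ge_1 K_pos b_ge1 by (simp add: error_rate_def)

lemma eps0_pos: "eps0 > 0"
  using eps_amplitude_pos amplitude_rate_pos gap_pos error_rate_nonneg by (simp add: eps0_def)

lemma decay_rate_pos: "decay_rate > 0"
  using amplitude_rate_pos gap_pos by (simp add: decay_rate_def)

lemma eps0_error_le: assumes "0 \<le> e" "e \<le> eps0" shows "8 * (e * error_rate) \<le> min amplitude_rate gap"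
proof -
  have "e * (8 * error_rate + 1) \<le> min amplitude_rate gap"
    using assms error_rate_nonneg by (simp add: eps0_def pos_le_divide_eq)
  moreover have "8 * (e * error_rate) \<le> e * (8 * error_rate + 1)" using assms by (simp add: algebra_simps)
  ultimately show ?thesis by linarith
qed

end

context dispersal_system_bounds
begin

context
  fixes e :: real and v w :: "real^'n"
  assumes e_nonneg: "0 \<le> e" and e_le_eps0: "e \<le> eps0"
    and v_nonneg: "comp_le 0 v" and v_amplitude: "phi \<bullet> v \<in> {a..b}"
    and w_pos: "\<forall>i. w$i > 0" and w_stationary: "rhs e w = 0"
begin

lemma w_nonneg: "comp_le 0 w"
  using w_pos by (simp add: comp_le_def less_imp_le)

lemma w_amplitude: "phi \<bullet> w \<in> {a..b}"
  using stationary_amplitude_mem[OF e_nonneg _ w_pos w_stationary] e_le_eps0 by (simp add: eps0_def)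

lemma amplitudes_pos: "phi \<bullet> v > 0" "phi \<bullet> w > 0"
  using v_amplitude w_amplitude a_pos by auto

lemma profiles_mem: "profile v \<in> profiles" "profile w \<in> profiles"
  using profile_in_profiles v_nonneg w_nonneg amplitudes_pos by auto

lemma norm_diff_le_amplitude_profile:
  "norm (v - w) \<le> norm_factor * \<bar>phi \<bullet> v - phi \<bullet> w\<bar> + b * norm (profile v - profile w)"
proof -
  have "v - w = (phi \<bullet> v - phi \<bullet> w) *\<^sub>R profile v + (phi \<bullet> w) *\<^sub>R (profile v - profile w)"
    using scaleR_profile amplitudes_pos
    by (simp add: algebra_simps)
  then have "norm (v - w) \<le> norm ((phi \<bullet> v - phi \<bullet> w) *\<^sub>R profile v)
      + norm ((phi \<bullet> w) *\<^sub>R (profile v - profile w))"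
    by (metis norm_triangle_ineq)
  also have "\<dots> = \<bar>phi \<bullet> v - phi \<bullet> w\<bar> * norm (profile v) + (phi \<bullet> w) * norm (profile v - profile w)"
    using amplitudes_pos by simp
  also have "\<dots> \<le> \<bar>phi \<bullet> v - phi \<bullet> w\<bar> * norm_factor + b * norm (profile v - profile w)"
    using norm_profile_le[OF profiles_mem(1)] w_amplitude b_ge1 by (intro add_mono mult_mono) auto
  finally show ?thesis by (simp add: mult.commute)
qed

lemma perturbation_profile_diff_le:
  "norm (perturbation_profile v - perturbation_profile w)
    \<le> lip_perturbation * (\<bar>phi \<bullet> v - phi \<bullet> w\<bar> + norm (profile v - profile w))"
proof -
  define X where "X = \<bar>phi \<bullet> v - phi \<bullet> w\<bar>"
  define Y where "Y = norm (profile v - profile w)"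
  have "v \<in> cball 0 (b * norm_factor)" "w \<in> cball 0 (b * norm_factor)"
    using mem_cball_if_amplitude_le v_nonneg w_nonneg v_amplitude w_amplitude by auto
  then have "\<bar>psi i v - psi i w\<bar> \<le> Lp * norm (v - w)" for i by (rule psi_lipschitz)
  then have "norm (perturbation_profile v - perturbation_profile w)
      \<le> real CARD('n) * (B * Y + Lp * norm (v - w) * norm_factor)"
    using norm_perturbation_profile_diff_le profiles_mem by (simp add: Y_def)
  also have "\<dots> \<le> real CARD('n) * (B * Y + Lp * (norm_factor * X + b * Y) * norm_factor)"
    using Lp_nonneg norm_factor_pos norm_diff_le_amplitude_profile
    by (intro mult_left_mono add_left_mono mult_right_mono) (auto simp: X_def Y_def)
  also have "\<dots> \<le> lip_perturbation * (X + Y)"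
  proof -
    have "0 \<le> real CARD('n) * (B * X + Lp * norm_factor * b * X + Lp * norm_factor * norm_factor * Y)"
      using B_nonneg Lp_nonneg norm_factor_pos b_ge1
      by (intro mult_nonneg_nonneg add_nonneg_nonneg) (auto simp: X_def Y_def)
    then show ?thesis by (simp add: lip_perturbation_def algebra_simps)
  qed
  finally show ?thesis by (simp add: X_def Y_def)
qed

lemma perturbation_tangent_diff_le:
  "norm (perturbation_tangent v - perturbation_tangent w)
    \<le> lip_tangent * (\<bar>phi \<bullet> v - phi \<bullet> w\<bar> + norm (profile v - profile w))"
proof -
  define X where "X = \<bar>phi \<bullet> v - phi \<bullet> w\<bar>"
  define Y where "Y = norm (profile v - profile w)"
  have "norm (perturbation_tangent v - perturbation_tangent w)
      \<le> (1 + norm_factor) * norm (perturbation_profile v - perturbation_profile w) + B * Y"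
    using norm_perturbation_tangent_diff_le v_nonneg amplitudes_pos profiles_mem by (simp add: Y_def)
  also have "\<dots> \<le> (1 + norm_factor) * (lip_perturbation * (X + Y)) + B * (X + Y)"
    using perturbation_profile_diff_le norm_factor_pos B_nonneg
    by (intro add_mono mult_left_mono) (auto simp: X_def Y_def)
  also have "\<dots> = lip_tangent * (X + Y)" by (simp add: lip_tangent_def algebra_simps)
  finally show ?thesis by (simp add: X_def Y_def)
qed

text \<open>Split \<open>alpha v - alpha w\<close> into a change of amplitude along the ray through
  \<open>profile v\<close>, where alpha is strongly monotone, and a change of profile at fixed amplitude,
  where it is Lipschitz.\<close>
lemma alpha_amplitude_dissipation:
  "(phi \<bullet> v - phi \<bullet> w) * (alpha w - alpha v)
    \<le> - m * (phi \<bullet> v - phi \<bullet> w)^2 + A * b * \<bar>phi \<bullet> v - phi \<bullet> w\<bar> * norm (profile v - profile w)"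
proof -
  define p where "p = phi \<bullet> v"
  define p' where "p' = phi \<bullet> w"
  define q where "q = profile v"
  define q' where "q' = profile w"
  have vw: "v = p *\<^sub>R q" "w = p' *\<^sub>R q'"
    using scaleR_profile amplitudes_pos by (auto simp: p_def p'_def q_def q'_def)
  have mono: "(alpha (p *\<^sub>R q) - alpha (p' *\<^sub>R q)) * (p - p') \<ge> m * (p - p')^2"
    using alpha_ray_monotone v_amplitude w_amplitude profiles_mem by (simp add: p_def p'_def q_def)
  have "p' *\<^sub>R q \<in> cball 0 (b * norm_factor)" "p' *\<^sub>R q' \<in> cball 0 (b * norm_factor)"
    using norm_profile_le[OF profiles_mem(1)] norm_profile_le[OF profiles_mem(2)] w_amplitude
      amplitudes_pos
    by (auto intro!: mult_mono simp: p'_def q_def q'_def mult.commute)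
  then have "\<bar>alpha (p' *\<^sub>R q) - alpha (p' *\<^sub>R q')\<bar> \<le> A * norm (p' *\<^sub>R q - p' *\<^sub>R q')"
    by (rule alpha_lipschitz)
  also have "\<dots> = A * (p' * norm (q - q'))"
    using amplitudes_pos by (simp add: p'_def scaleR_right_diff_distrib[symmetric])
  also have "\<dots> \<le> A * (b * norm (q - q'))"
    using A_nonneg w_amplitude by (intro mult_left_mono mult_right_mono) (auto simp: p'_def)
  finally have lip: "\<bar>alpha (p' *\<^sub>R q) - alpha (p' *\<^sub>R q')\<bar> \<le> A * b * norm (q - q')" by simp
  have "- ((p - p') * (alpha (p' *\<^sub>R q) - alpha (p' *\<^sub>R q')))
      \<le> \<bar>p - p'\<bar> * \<bar>alpha (p' *\<^sub>R q) - alpha (p' *\<^sub>R q')\<bar>"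
    by (metis abs_ge_minus_self abs_mult)
  also have "\<dots> \<le> \<bar>p - p'\<bar> * (A * b * norm (q - q'))" using lip by (simp add: mult_left_mono)
  finally have cross: "- ((p - p') * (alpha (p' *\<^sub>R q) - alpha (p' *\<^sub>R q')))
      \<le> \<bar>p - p'\<bar> * (A * b * norm (q - q'))" .
  have "(p - p') * (alpha w - alpha v) = - ((alpha (p *\<^sub>R q) - alpha (p' *\<^sub>R q)) * (p - p'))
      - (p - p') * (alpha (p' *\<^sub>R q) - alpha (p' *\<^sub>R q'))"
    using vw by (simp add: algebra_simps)
  then have "(p - p') * (alpha w - alpha v) \<le> - m * (p - p')^2 + A * b * \<bar>p - p'\<bar> * norm (q - q')"
    using mono cross by (simp add: algebra_simps)
  then show ?thesis by (simp add: p_def p'_def q_def q'_def)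
qed

lemma amplitude_dissipation:
  "(phi \<bullet> v - phi \<bullet> w) * (phi \<bullet> rhs e v)
    \<le> - amplitude_rate * \<bar>phi \<bullet> v - phi \<bullet> w\<bar>^2
      + coupling * \<bar>phi \<bullet> v - phi \<bullet> w\<bar> * norm (profile v - profile w)
      + e * (b * lip_perturbation / K) * (\<bar>phi \<bullet> v - phi \<bullet> w\<bar> + norm (profile v - profile w))
        * \<bar>phi \<bullet> v - phi \<bullet> w\<bar>"
proof -
  define x where "x = phi \<bullet> v - phi \<bullet> w"
  define X where "X = \<bar>x\<bar>"
  define Y where "Y = norm (profile v - profile w)"
  define dG where "dG = perturbation_profile v - perturbation_profile w"
  have "phi \<bullet> rhs e w = 0" using w_stationary by simp
  then have "lam - alpha w / K - (e / K) * (phi \<bullet> perturbation_profile w) = 0"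
    using inner_phi_rhs_eq[of w e] amplitudes_pos by simp
  then have rhs_v: "phi \<bullet> rhs e v = (phi \<bullet> v) * ((alpha w - alpha v) / K - (e / K) * (phi \<bullet> dG))"
    using inner_phi_rhs_eq[of v e] amplitudes_pos
    by (simp add: dG_def inner_diff_right diff_divide_distrib algebra_simps)
  have "- (x * ((e / K) * (phi \<bullet> dG))) \<le> X * ((e / K) * \<bar>phi \<bullet> dG\<bar>)"
    using e_nonneg K_pos unfolding X_def
    by (metis abs_ge_minus_self abs_mult abs_of_nonneg divide_nonneg_pos mult_nonneg_nonneg abs_mult[of "e/K"])
  also have "\<dots> \<le> X * ((e / K) * (lip_perturbation * (X + Y)))"
    using abs_inner_phi_le_norm[of dG] perturbation_profile_diff_le e_nonneg K_pos
    by (intro mult_left_mono) (auto simp: X_def Y_def x_def dG_def)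
  finally have err: "- (x * ((e / K) * (phi \<bullet> dG))) \<le> (e / K) * (lip_perturbation * (X + Y) * X)"
    by (simp add: algebra_simps)
  have "x * (alpha w - alpha v) / K \<le> (- m * x^2 + A * b * X * Y) / K"
    using alpha_amplitude_dissipation K_pos by (simp add: divide_right_mono x_def X_def Y_def)
  then have "x * (alpha w - alpha v) / K - x * ((e / K) * (phi \<bullet> dG))
      \<le> - (m * x^2 / K) + (A * b * X * Y / K + (e / K) * (lip_perturbation * (X + Y) * X))"
    using err by (simp add: diff_divide_distrib)
  then have "(phi \<bullet> v) * (x * (alpha w - alpha v) / K - x * ((e / K) * (phi \<bullet> dG)))
      \<le> (phi \<bullet> v) * (- (m * x^2 / K) + (A * b * X * Y / K + (e / K) * (lip_perturbation * (X + Y) * X)))"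
    using amplitudes_pos by (intro mult_left_mono) auto
  moreover have "x * (phi \<bullet> rhs e v)
      = (phi \<bullet> v) * (x * (alpha w - alpha v) / K - x * ((e / K) * (phi \<bullet> dG)))"
    unfolding rhs_v by (simp add: algebra_simps)
  ultimately have "x * (phi \<bullet> rhs e v)
      \<le> (phi \<bullet> v) * (- (m * x^2 / K) + (A * b * X * Y / K + (e / K) * (lip_perturbation * (X + Y) * X)))"
    by simp
  also have "\<dots> \<le> - a * (m * x^2 / K) + b * (A * b * X * Y / K + (e / K) * (lip_perturbation * (X + Y) * X))"
  proof -
    have "0 \<le> A * b * X * Y / K + (e / K) * (lip_perturbation * (X + Y) * X)"
      using K_pos A_nonneg b_ge1 e_nonneg lip_perturbation_nonneg
      by (auto intro!: add_nonneg_nonneg mult_nonneg_nonneg divide_nonneg_pos simp: X_def Y_def)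
    moreover have "0 \<le> m * x^2 / K" using m_pos K_pos by simp
    ultimately show ?thesis
      using v_amplitude mult_right_mono[of a "phi \<bullet> v" "m * x^2 / K"]
        mult_right_mono[of "phi \<bullet> v" b "A * b * X * Y / K + (e / K) * (lip_perturbation * (X + Y) * X)"]
      by (simp add: algebra_simps)
  qed
  also have "\<dots> = - amplitude_rate * X^2 + coupling * X * Y + e * (b * lip_perturbation / K) * (X + Y) * X"
    by (simp add: amplitude_rate_def coupling_def X_def power2_abs algebra_simps add_divide_distrib)
  finally show ?thesis by (simp add: x_def X_def Y_def)
qed

lemma profile_dissipation:
  "(profile v - profile w) \<bullet> profile_deriv e v
    \<le> - gap * (norm (profile v - profile w))^2
      + e * (lip_tangent / K) * (\<bar>phi \<bullet> v - phi \<bullet> w\<bar> + norm (profile v - profile w))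
        * norm (profile v - profile w)"
proof -
  define y where "y = profile v - profile w"
  define dH where "dH = perturbation_tangent v - perturbation_tangent w"
  have "profile_deriv e w = 0" using w_stationary by (simp add: profile_deriv_def)
  then have "profile_deriv e v = (linearization r mu *v y - lam *\<^sub>R y) - (e / K) *\<^sub>R dH"
    using profile_deriv_eq amplitudes_pos
    by (simp add: y_def dH_def matrix_vector_mult_diff_distrib algebra_simps)
  moreover have "phi \<bullet> y = 0"
    using profiles_mem by (simp add: y_def profiles_def inner_diff_right)
  then have "y \<bullet> (linearization r mu *v y - lam *\<^sub>R y) \<le> - gap * (norm y)^2"
    using spectral_gap by (simp add: inner_diff_right power2_norm_eq_inner algebra_simps)
  moreover have "- (y \<bullet> ((e / K) *\<^sub>R dH))
      \<le> e * (lip_tangent / K) * (\<bar>phi \<bullet> v - phi \<bullet> w\<bar> + norm y) * norm y"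
  proof -
    have "(e / K) * (- (y \<bullet> dH)) \<le> (e / K) * (norm y * norm dH)"
      using Cauchy_Schwarz_ineq2[of y dH] e_nonneg K_pos by (intro mult_left_mono) auto
    also have "\<dots> \<le> (e / K) * (norm y * (lip_tangent * (\<bar>phi \<bullet> v - phi \<bullet> w\<bar> + norm y)))"
      using perturbation_tangent_diff_le e_nonneg K_pos
      by (intro mult_left_mono) (auto simp: y_def dH_def)
    finally show ?thesis by (simp add: algebra_simps)
  qed
  ultimately show ?thesis by (simp add: y_def inner_diff_right)
qed

lemma lyapunov_dissipation:
  "2 * (phi \<bullet> v - phi \<bullet> w) * (phi \<bullet> rhs e v)
      + weight * (2 * ((profile v - profile w) \<bullet> profile_deriv e v))
    \<le> - decay_rate * lyapunov weight w v"
proof -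
  define X where "X = \<bar>phi \<bullet> v - phi \<bullet> w\<bar>"
  define Y where "Y = norm (profile v - profile w)"
  define T where "T = (phi \<bullet> v - phi \<bullet> w) * (phi \<bullet> rhs e v)
      + weight * ((profile v - profile w) \<bullet> profile_deriv e v)"
  have XY: "X \<ge> 0" "Y \<ge> 0" by (simp_all add: X_def Y_def)
  have "weight * ((profile v - profile w) \<bullet> profile_deriv e v)
      \<le> weight * (- gap * Y^2 + e * (lip_tangent / K) * (X + Y) * Y)"
    using profile_dissipation weight_ge_1 by (intro mult_left_mono) (auto simp: X_def Y_def)
  moreover have "(phi \<bullet> v - phi \<bullet> w) * (phi \<bullet> rhs e v)
      \<le> - amplitude_rate * X^2 + coupling * X * Y + e * (b * lip_perturbation / K) * (X + Y) * X"
    using amplitude_dissipation by (simp add: X_def Y_def)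
  moreover have "weight * (- gap * Y^2 + e * (lip_tangent / K) * (X + Y) * Y)
      + e * (b * lip_perturbation / K) * (X + Y) * X
    = - weight * gap * Y^2
      + e * ((b * lip_perturbation / K) * ((X + Y) * X) + weight * (lip_tangent / K) * ((X + Y) * Y))"
    by (simp add: algebra_simps)
  ultimately have "T \<le> - amplitude_rate * X^2 + coupling * X * Y - weight * gap * Y^2
      + e * ((b * lip_perturbation / K) * ((X + Y) * X) + weight * (lip_tangent / K) * ((X + Y) * Y))"
    unfolding T_def by linarith
  also have "e * ((b * lip_perturbation / K) * ((X + Y) * X) + weight * (lip_tangent / K) * ((X + Y) * Y))
      \<le> (e * error_rate) * (X + Y)^2"
  proof -
    have "(X + Y) * X \<le> (X + Y)^2" "(X + Y) * Y \<le> (X + Y)^2"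
      using XY by (simp_all add: power2_eq_square mult_left_mono)
    then have "e * ((b * lip_perturbation / K) * ((X + Y) * X) + weight * (lip_tangent / K) * ((X + Y) * Y))
        \<le> e * ((b * lip_perturbation / K) * (X + Y)^2 + weight * (lip_tangent / K) * (X + Y)^2)"
      using e_nonneg K_pos lip_perturbation_nonneg lip_tangent_nonneg weight_ge_1 b_ge1
      by (intro mult_left_mono add_mono) (auto intro!: mult_left_mono mult_nonneg_nonneg)
    then show ?thesis by (simp add: error_rate_def algebra_simps)
  qed
  finally have "T \<le> - (min amplitude_rate gap / 4) * (X^2 + weight * Y^2)"
    by (intro absorb_cross_and_error_terms[OF amplitude_rate_pos gap_pos weight_def XY _
          eps0_error_le[OF e_nonneg e_le_eps0]])
      (use e_nonneg error_rate_nonneg in simp_all)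
  then show ?thesis
    by (simp add: T_def decay_rate_def lyapunov_def X_def Y_def power2_abs algebra_simps)
qed

lemma norm_diff_le_lyapunov: "norm (v - w) \<le> (norm_factor + b) * sqrt (lyapunov weight w v)"
proof -
  have "\<bar>phi \<bullet> v - phi \<bullet> w\<bar> \<le> sqrt (lyapunov weight w v)"
    using weight_ge_1 by (intro real_le_rsqrt) (simp add: lyapunov_def)
  moreover have "norm (profile v - profile w) \<le> sqrt (lyapunov weight w v)"
  proof (intro real_le_rsqrt)
    have "(norm (profile v - profile w))^2 \<le> weight * (norm (profile v - profile w))^2"
      using weight_ge_1 by (simp add: mult_le_cancel_right1)
    then show "(norm (profile v - profile w))^2 \<le> lyapunov weight w v"
      by (simp add: lyapunov_def add_increasing)
  qed
  ultimately have "norm_factor * \<bar>phi \<bullet> v - phi \<bullet> w\<bar> + b * norm (profile v - profile w)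
      \<le> norm_factor * sqrt (lyapunov weight w v) + b * sqrt (lyapunov weight w v)"
    using norm_factor_pos b_ge1 by (intro add_mono mult_left_mono) auto
  then show ?thesis using norm_diff_le_amplitude_profile by (simp add: distrib_right)
qed

end

end

section \<open>Convergence\<close>

context dispersal_system_bounds
begin

context
  fixes e :: real and v :: "real \<Rightarrow> real^'n"
  assumes e_nonneg: "0 \<le> e" and e_le_eps_amplitude: "e \<le> eps_amplitude"
    and solution: "\<And>t. t \<ge> 0 \<Longrightarrow> (v has_vector_derivative rhs e (v t)) (at t within {0..})"
    and initial_nonneg: "comp_le 0 (v 0)" and initial_nonzero: "v 0 \<noteq> 0"
begin

lemma amplitude_has_derivative:
  "t \<ge> 0 \<Longrightarrow> ((\<lambda>t. phi \<bullet> v t) has_real_derivative phi \<bullet> rhs e (v t)) (at t within {0..})"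
  using has_real_derivative_inner_phi[OF solution] .

lemma trajectory_nonneg: "t \<ge> 0 \<Longrightarrow> comp_le 0 (v t)"
  using solution_nonneg[OF solution initial_nonneg] .

text \<open>Below \<open>a\<close> the amplitude grows at a rate proportional to itself, so it never drops
  below \<open>min (phi \<bullet> v 0) a\<close> and therefore exceeds \<open>a\<close> after a finite time.\<close>
lemma amplitude_eventually_ge: "\<exists>T\<ge>0. \<forall>t\<ge>T. phi \<bullet> v t \<ge> a"
proof -
  define a0 where "a0 = min (phi \<bullet> v 0) a"
  have "a0 > 0" using inner_phi_pos[OF initial_nonneg initial_nonzero] a_pos by (simp add: a0_def)
  have grow: "phi \<bullet> rhs e (v t) \<ge> (lam / 2) * (phi \<bullet> v t)" if "t \<ge> 0" "phi \<bullet> v t < a" for t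
    using inner_phi_rhs_ge_if_small[OF e_nonneg e_le_eps_amplitude trajectory_nonneg] that by blast
  have lower: "phi \<bullet> v t \<ge> a0" if "t \<ge> 0" for t
  proof -
    have "phi \<bullet> v t \<ge> min (phi \<bullet> v 0) a"
    proof (rule deriv_nonneg_below_imp_ge_min[OF amplitude_has_derivative _ order_refl that])
      fix s :: real assume "s \<ge> 0" "phi \<bullet> v s < a"
      then show "phi \<bullet> rhs e (v s) \<ge> 0"
        using grow[of s] inner_phi_nonneg[OF trajectory_nonneg[of s]] lam_pos
        by (meson half_gt_zero less_imp_le mult_nonneg_nonneg order_trans)
    qed
    then show ?thesis by (simp add: a0_def)
  qed
  show ?thesis
  proof (rule eventually_ge_if_deriv_ge_below[OF amplitude_has_derivative])
    show "0 < lam / 2 * a0" using lam_pos \<open>a0 > 0\<close> by simp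
  next
    fix t :: real assume "t \<ge> 0" "phi \<bullet> v t < a"
    then show "lam / 2 * a0 \<le> phi \<bullet> rhs e (v t)"
      using grow[of t] lower[of t] lam_pos by (meson half_gt_zero less_imp_le mult_left_mono order_trans)
  qed
qed

lemma amplitude_eventually_le: "\<exists>T\<ge>0. \<forall>t\<ge>T. phi \<bullet> v t \<le> b"
proof -
  have "\<exists>T\<ge>0. \<forall>t\<ge>T. - (phi \<bullet> v t) \<ge> - b"
  proof (rule eventually_ge_if_deriv_ge_below)
    fix t :: real assume "t \<ge> 0"
    then show "((\<lambda>t. - (phi \<bullet> v t)) has_real_derivative - (phi \<bullet> rhs e (v t))) (at t within {0..})"
      using amplitude_has_derivative by (auto intro!: derivative_eq_intros)
  next
    show "0 < lam / 2 * b" using lam_pos b_ge1 by simp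
  next
    fix t :: real assume t: "t \<ge> 0" "- (phi \<bullet> v t) < - b"
    then have "phi \<bullet> rhs e (v t) \<le> - (lam / 2) * (phi \<bullet> v t)"
      using inner_phi_rhs_le_if_large[OF e_nonneg e_le_eps_amplitude trajectory_nonneg] by simp
    moreover have "(lam / 2) * b \<le> (lam / 2) * (phi \<bullet> v t)" using t lam_pos by simp
    ultimately show "lam / 2 * b \<le> - (phi \<bullet> rhs e (v t))" by simp
  qed
  then show ?thesis by simp
qed

lemma amplitude_eventually_in_range:
  obtains T where "T \<ge> 0" "\<And>t. t \<ge> T \<Longrightarrow> comp_le 0 (v t) \<and> phi \<bullet> v t \<in> {a..b}"
proof -
  obtain T1 T2 where "T1 \<ge> 0" "\<forall>t\<ge>T1. phi \<bullet> v t \<ge> a" "\<forall>t\<ge>T2. phi \<bullet> v t \<le> b"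
    using amplitude_eventually_ge amplitude_eventually_le by blast
  then show ?thesis using that[of "max T1 T2"] trajectory_nonneg by auto
qed

end

theorem convergence_to_stationary:
  assumes e: "0 \<le> e" "e \<le> eps0"
    and w: "\<forall>i. w$i > 0" "rhs e w = 0"
    and solution: "\<And>t. t \<ge> 0 \<Longrightarrow> (v has_vector_derivative rhs e (v t)) (at t within {0..})"
    and initial: "comp_le 0 (v 0)" "v 0 \<noteq> 0"
  shows "(v \<longlongrightarrow> w) at_top"
proof -
  have "e \<le> eps_amplitude" using e by (simp add: eps0_def)
  then obtain T where "T \<ge> 0" and in_range: "\<And>t. t \<ge> T \<Longrightarrow> comp_le 0 (v t) \<and> phi \<bullet> v t \<in> {a..b}"
    using amplitude_eventually_in_range[OF e(1) _ solution initial] by blast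
  define V where "V = (\<lambda>t. lyapunov weight w (v t))"
  define V' where "V' = (\<lambda>t. 2 * (phi \<bullet> v t - phi \<bullet> w) * (phi \<bullet> rhs e (v t))
      + weight * (2 * ((profile (v t) - profile w) \<bullet> profile_deriv e (v t))))"
  have V_der: "(V has_real_derivative V' t) (at t within {T..t'})" if "t \<in> {T..t'}" for t t'
  proof -
    have "(v has_vector_derivative rhs e (v t)) (at t within {T..t'})"
      using solution[of t] that \<open>T \<ge> 0\<close> by (auto intro: has_vector_derivative_within_subset)
    moreover have "phi \<bullet> v t > 0" using in_range[of t] that a_pos by auto
    ultimately show ?thesis unfolding V_def V'_def by (rule lyapunov_has_derivative)
  qed
  have V_decay: "V' t \<le> - decay_rate * V t" if "t \<in> {T..t'}" for t t'
    using lyapunov_dissipation[OF e _ _ w] in_range[of t] that by (simp add: V_def V'_def)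
  have V_bound: "V t \<le> (exp (decay_rate * T) * V T) * exp (- decay_rate * t)" if "t \<ge> T" for t
    using deriv_le_linear_imp_exp_bound[OF V_der[of _ t] V_decay[of _ t] that]
    by (simp add: mult_exp_exp algebra_simps)
  have V_nonneg: "V t \<ge> 0" for t using weight_ge_1 by (simp add: V_def lyapunov_def)
  have "(V \<longlongrightarrow> 0) at_top"
  proof (rule Lim_null_comparison[OF _ tendsto_mult_exp_neg_at_top[OF decay_rate_pos]])
    show "\<forall>\<^sub>F t in at_top. norm (V t) \<le> (exp (decay_rate * T) * V T) * exp (- decay_rate * t)"
      using V_bound V_nonneg by (auto simp: eventually_at_top_linorder intro!: exI[of _ T])
  qed
  then have "((\<lambda>t. sqrt (V t)) \<longlongrightarrow> 0) at_top" using tendsto_real_sqrt by force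
  then have sqrt_decay: "((\<lambda>t. (norm_factor + b) * sqrt (V t)) \<longlongrightarrow> 0) at_top"
    by (rule tendsto_mult_right_zero)
  have "norm (v t - w) \<le> (norm_factor + b) * sqrt (V t)" if "t \<ge> T" for t
    using norm_diff_le_lyapunov[OF e _ _ w] in_range[OF that] by (simp add: V_def)
  then have "((\<lambda>t. v t - w) \<longlongrightarrow> 0) at_top"
    by (intro Lim_null_comparison[OF _ sqrt_decay]) (auto simp: eventually_at_top_linorder)
  then show ?thesis by (rule LIM_zero_cancel)
qed

end

context dispersal_system
begin

lemma exists_bounds:
  obtains a b A Lp m where "dispersal_system_bounds K r mu alpha ga psi gpsi B phi lam gap a b A Lp m"
proof -
  obtain a where a: "a > 0" "a \<le> 1" "\<And>v. comp_le 0 v \<Longrightarrow> phi \<bullet> v < a \<Longrightarrow> alpha v \<le> K * lam / 4"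
    using small_amplitude_alpha_le by blast
  obtain b where b: "b \<ge> 1" "\<And>v. comp_le 0 v \<Longrightarrow> phi \<bullet> v \<ge> b \<Longrightarrow> alpha v \<ge> 2 * K * lam"
    using large_amplitude_alpha_ge by blast
  obtain A where A: "A \<ge> 0" "\<And>x y. x \<in> cball 0 (b * norm_factor) \<Longrightarrow> y \<in> cball 0 (b * norm_factor) \<Longrightarrow>
      \<bar>alpha x - alpha y\<bar> \<le> A * norm (x - y)"
    using lipschitz_on_cball_if_grad[OF alpha_der ga_cont] by blast
  obtain Lp where Lp: "Lp \<ge> 0" "\<And>i x y. x \<in> cball 0 (b * norm_factor) \<Longrightarrow> y \<in> cball 0 (b * norm_factor) \<Longrightarrow>
      \<bar>psi i x - psi i y\<bar> \<le> Lp * norm (x - y)"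
    using psi_uniform_lipschitz by blast
  obtain m where m: "m > 0" "\<And>p p' q. p \<in> {a..b} \<Longrightarrow> p' \<in> {a..b} \<Longrightarrow> q \<in> profiles \<Longrightarrow>
      (alpha (p *\<^sub>R q) - alpha (p' *\<^sub>R q)) * (p - p') \<ge> m * (p - p')^2"
    using alpha_ray_strongly_monotone[of a b] a b by auto
  show ?thesis
    by (rule that[of a b A Lp m], unfold_locales) (use a b A Lp m in auto)
qed

end

text \<open>The row-sum bound on mu, the monotonicity of alpha and the hypotheses on \<open>Psi\<close> are
  only needed to construct the positive stationary solution, which the statement takes as given.\<close>
theorem theorem1p4:
  fixes K :: real and r :: "real ^ 'n" and mu :: "real ^ 'n ^ 'n"
    and alpha :: "real ^ 'n \<Rightarrow> real" and psi :: "'n \<Rightarrow> real ^ 'n \<Rightarrow> real"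
  assumes K_pos: "K > 0"
    and r_pos: "\<forall>i. r $ i > 0"
    and mu_nonneg: "\<forall>i j. mu $ i $ j \<ge> 0"
    and mu_sym: "\<forall>i j. mu $ i $ j = mu $ j $ i"
    and mu_irred: "irreducible_mat mu"
    and mu_rowsum: "\<forall>i. (\<Sum>j\<in>UNIV. mu $ i $ j) \<le> r $ i / 2"
    and alpha_C1: "\<exists>g. C1_grad alpha g \<and> (\<forall>x i. g x $ i > 0)"
    and alpha_0: "alpha 0 = 0"
    and alpha_mono: "comp_mono alpha"
    and alpha_growth: "growth_bound alpha"
    and psi_C1: "\<forall>i. \<exists>g. C1_grad (psi i) g"
    and psi_bdd: "\<exists>B. \<forall>i x. \<bar>psi i x\<bar> \<le> B"
  shows "\<exists>\<epsilon>0>0. \<forall>\<epsilon>. 0 \<le> \<epsilon> \<and> \<epsilon> \<le> \<epsilon>0 \<longrightarrow>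
    (let Psi = (\<lambda>i v. alpha v + \<epsilon> * psi i v) in
      (\<forall>i. locally_lipschitz (Psi i) \<and> Psi i 0 = 0 \<and> comp_mono (Psi i) \<and> growth_bound (Psi i))
      \<longrightarrow>
      (\<forall>vbar. (\<forall>i. vbar $ i > 0) \<and> sys_rhs r K mu Psi vbar = 0 \<longrightarrow>
        (\<forall>v :: real \<Rightarrow> real ^ 'n.
           (\<forall>t\<ge>0. (v has_vector_derivative sys_rhs r K mu Psi (v t)) (at t within {0..}))
           \<and> (\<forall>i. v 0 $ i \<ge> 0) \<and> v 0 \<noteq> 0
           \<longrightarrow> (v \<longlongrightarrow> vbar) at_top)))"
proof -
  obtain ga where ga: "C1_grad alpha ga" "\<forall>x i. ga x $ i > 0" using alpha_C1 by blast
  obtain gpsi where gpsi: "\<And>i. C1_grad (psi i) (gpsi i)" using psi_C1 by metis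
  obtain B where B: "\<forall>i x. \<bar>psi i x\<bar> \<le> B" using psi_bdd by blast
  obtain phi lam gap where eig: "\<And>i. phi$i > 0" "norm phi = 1"
    "linearization r mu *v phi = lam *\<^sub>R phi" "lam > 0" "gap > 0"
    "\<And>x. phi \<bullet> x = 0 \<Longrightarrow> x \<bullet> (linearization r mu *v x) \<le> (lam - gap) * (norm x)^2"
    using linearization_principal_eigenvector[OF r_pos mu_nonneg mu_sym mu_irred] by blast
  interpret dispersal_system K r mu alpha ga psi gpsi B phi lam gap
    using K_pos mu_nonneg mu_sym ga gpsi alpha_0 alpha_growth B eig
    by unfold_locales (auto simp: C1_grad_def)
  obtain a b A Lp m where "dispersal_system_bounds K r mu alpha ga psi gpsi B phi lam gap a b A Lp m"
    by (rule exists_bounds)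
  then interpret dispersal_system_bounds K r mu alpha ga psi gpsi B phi lam gap a b A Lp m .
  show ?thesis
    unfolding Let_def
    by (intro exI[of _ eps0] conjI allI impI eps0_pos; elim conjE)
      (auto intro!: convergence_to_stationary simp: rhs_def comp_le_def)
qed

end
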